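(* Let $n\ge0$ be an integer and let $\omega_1,\dots,\omega_r\in S^2$ ($r\ge1$) be pairwise different in the sense that $\omega_i\neq\pm\omega_j$ for $i\neq j$. Then $$\dim\operatorname{span}\{\dot P_n^{\omega_k}\mid k=1,\dots,r\}=\begin{cases}2r,& r\le n,\\ 2n+1,& r>n.\end{cases}$$
   Context: $\dot P_n$ denotes the real vector space of homogeneous harmonic polynomials of degree $n$ in the variables $x_1,x_2,x_3$ (real linear combinations of monomials $x_1^{r_1}x_2^{r_2}x_3^{r_3}$ with $r_1+r_2+r_3=n$, annihilated by the Laplacian). For $\omega\in S^2$, $\dot P_n^\omega\subset\dot P_n$ is the subspace of those polynomials that are $\omega$-axial, i.e. constant on every straight line $x_0+t\omega$ ($x_0\in\mathbb{R}^3$, $t\in\mathbb{R}$). The span is the real linear span of the union of the subspaces. *)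

theory Defs
  imports "HOL-Analysis.Analysis" "HOL-Library.Function_Algebras"
begin

definition fscale :: "real \<Rightarrow> (real^3 \<Rightarrow> real) \<Rightarrow> (real^3 \<Rightarrow> real)" where
  "fscale c f = (\<lambda>x. c * f x)"

definition fspan :: "(real^3 \<Rightarrow> real) set \<Rightarrow> (real^3 \<Rightarrow> real) set" where
  "fspan = Modules.module.span fscale"

definition fdim :: "(real^3 \<Rightarrow> real) set \<Rightarrow> nat" where
  "fdim = Vector_Spaces.vector_space.dim fscale"

definition degs :: "nat \<Rightarrow> (nat \<times> nat \<times> nat) set" where
  "degs n = {(a, b, d). a + b + d = n}"

definition hom_poly :: "nat \<Rightarrow> (real^3 \<Rightarrow> real) \<Rightarrow> bool" where
  "hom_poly n f \<longleftrightarrow> (\<exists>c :: nat \<times> nat \<times> nat \<Rightarrow> real.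
      f = (\<lambda>x. \<Sum>(a, b, d)\<in>degs n. c (a, b, d) * x$1 ^ a * x$2 ^ b * x$3 ^ d))"

definition laplacian :: "(real^3 \<Rightarrow> real) \<Rightarrow> real^3 \<Rightarrow> real" where
  "laplacian f x = (\<Sum>i\<in>UNIV. deriv (deriv (\<lambda>t. f (x + t *\<^sub>R axis i 1))) 0)"

definition harmonic_hom :: "nat \<Rightarrow> (real^3 \<Rightarrow> real) set" where
  "harmonic_hom n = {f. hom_poly n f \<and> (\<forall>x. laplacian f x = 0)}"

definition axial :: "real^3 \<Rightarrow> (real^3 \<Rightarrow> real) \<Rightarrow> bool" where
  "axial \<omega> f \<longleftrightarrow> (\<forall>x0 t. f (x0 + t *\<^sub>R \<omega>) = f x0)"

definition harmonic_axial :: "nat \<Rightarrow> real^3 \<Rightarrow> (real^3 \<Rightarrow> real) set" where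
  "harmonic_axial n \<omega> = {f \<in> harmonic_hom n. axial \<omega> f}"

end

theory Submission
  imports Defs "HOL-Computational_Algebra.Polynomial"
begin

text \<open>
  Fix an orthonormal frame \<open>u, v, \<omega>\<close> and put \<open>h(x) = (u + i v) \<bullet> x\<close>. An \<open>\<omega>-axial\<close> polynomial
  only depends on \<open>u \<bullet> x\<close> and \<open>v \<bullet> x\<close>, and harmonicity is a two-step recurrence on its
  coefficients in these variables, so they are determined by the two top ones; hence the
  \<open>\<omega>-axial\<close> harmonics of degree \<open>n\<close> are spanned by \<open>Re (h\<^sup>n)\<close> and \<open>Im (h\<^sup>n)\<close>. Likewise the
  coefficients of any harmonic polynomial are determined by those of the monomials of degree
  at most one in \<open>x\<^sub>3\<close>, so all of \<open>P\<^sub>n\<close> lies in a span of \<open>2n + 1\<close> functions.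

  Conversely, \<open>2 Re (c h\<^sup>n) = c h\<^sup>n + c\<^sup>* (h\<^sup>*)\<^sup>n\<close>, and \<open>h, h\<^sup>*\<close> are linear forms with isotropic
  coefficient vectors \<open>u \<plusminus> i v\<close>, pairwise non-proportional for directions \<open>\<omega>\<^sub>k \<noteq> \<plusminus>\<omega>\<^sub>j\<close>. Along the
  parametrisation \<open>(1 - \<mu>\<^sup>2, i (1 + \<mu>\<^sup>2), 2 \<mu>)\<close> of the isotropic cone such a form becomes the
  square of a linear polynomial in \<open>\<mu>\<close>, so \<open>n\<close>-th powers of at most \<open>2n + 1\<close> of them become
  \<open>2n\<close>-th powers of at most \<open>2n + 1\<close> non-proportional linear polynomials, which are linearly
  independent. This gives \<open>2r\<close> independent functions when \<open>r \<le> n\<close>, and \<open>2n + 1\<close> when \<open>r > n\<close>.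
\<close>

section \<open>Independence of powers of linear polynomials\<close>

lemma pderiv_linear_power:
  "pderiv ([:b, a:] ^ N) = smult (of_nat N * a) ([:b, a:] ^ (N - 1))"
  by (simp add: pderiv_power pderiv_pCons)

lemma annihilate_linear_power:
  fixes a b a' b' :: "'a::idom"
  shows "[:b', a':] * pderiv ([:b, a:] ^ N) - smult (of_nat N * a') ([:b, a:] ^ N)
     = smult (of_nat N * (a * b' - a' * b)) ([:b, a:] ^ (N - 1))"
proof (cases N)
  case (Suc M)
  then have "[:b, a:] ^ N = [:b, a:] * [:b, a:] ^ M" by simp
  then show ?thesis
    unfolding pderiv_linear_power using Suc
    by (simp add: algebra_simps smult_add_right poly_eq_iff coeff_mult)
qed simp

text \<open>The operator \<open>p \<mapsto> l\<^sub>m p' - N \<alpha>\<^sub>m p\<close> kills \<open>l\<^sub>m\<^sup>N\<close> and sends \<open>l\<^sub>j\<^sup>N\<close> to a nonzero multiple of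
  \<open>l\<^sub>j\<^sup>N\<^sup>-\<^sup>1\<close> for \<open>j \<noteq> m\<close>; this lets the induction drop one form and one degree.\<close>

lemma linear_powers_independent:
  fixes \<alpha> \<beta> d :: "'i \<Rightarrow> 'a::{idom,ring_char_0}"
  assumes "finite J" "card J \<le> N + 1"
    and "\<forall>j\<in>J. \<alpha> j \<noteq> 0 \<or> \<beta> j \<noteq> 0"
    and "\<forall>j\<in>J. \<forall>k\<in>J. j \<noteq> k \<longrightarrow> \<alpha> j * \<beta> k \<noteq> \<alpha> k * \<beta> j"
    and "(\<Sum>j\<in>J. smult (d j) ([:\<beta> j, \<alpha> j:] ^ N)) = 0"
  shows "\<forall>j\<in>J. d j = 0"
  using assms
proof (induction J arbitrary: N d rule: finite_induct)
  case (insert m J)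
  let ?l = "\<lambda>j. [:\<beta> j, \<alpha> j:]"
  have lm: "?l m ^ N \<noteq> 0" using insert.prems(2) by auto
  show ?case
  proof (cases "J = {}")
    case True
    then show ?thesis using insert.prems(4) lm by auto
  next
    case False
    then have N: "N \<noteq> 0" "card J \<le> (N - 1) + 1"
      using insert.prems(1) insert.hyps by (auto simp: card_gt_0_iff Suc_le_eq)
    define D where "D p = ?l m * pderiv p - smult (of_nat N * \<alpha> m) p" for p
    define e where "e j = d j * (of_nat N * (\<alpha> j * \<beta> m - \<alpha> m * \<beta> j))" for j
    have D_sum: "D (\<Sum>j\<in>A. smult (c j) (q j)) = (\<Sum>j\<in>A. smult (c j) (D (q j)))" for A c q
      by (induction A rule: infinite_finite_induct)
        (auto simp: D_def pderiv_add pderiv_smult algebra_simps smult_add_right smult_diff_right)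
    have D_power: "D (?l j ^ N) = smult (of_nat N * (\<alpha> j * \<beta> m - \<alpha> m * \<beta> j)) (?l j ^ (N - 1))" for j
      unfolding D_def by (rule annihilate_linear_power)
    have "D (\<Sum>j\<in>insert m J. smult (d j) (?l j ^ N)) = 0"
      using insert.prems(4) by (simp add: D_def)
    then have "(\<Sum>j\<in>insert m J. smult (d j) (D (?l j ^ N))) = 0"
      by (simp only: D_sum)
    then have "(\<Sum>j\<in>J. smult (e j) (?l j ^ (N - 1))) = 0"
      using insert.hyps by (simp add: D_power e_def)
    then have "\<forall>j\<in>J. e j = 0"
      using insert.IH[of "N - 1" e] N insert.prems(2,3) by auto
    moreover have "\<alpha> j * \<beta> m - \<alpha> m * \<beta> j \<noteq> 0" if "j \<in> J" for j
      using insert.prems(3) insert.hyps that by auto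
    ultimately have dJ: "\<forall>j\<in>J. d j = 0"
      using N by (auto simp: e_def)
    then have "smult (d m) (?l m ^ N) = 0" using insert.prems(4) insert.hyps by simp
    then show ?thesis using dJ lm by auto
  qed
qed simp

section \<open>Isotropic vectors in \<open>\<complex>\<^sup>3\<close>\<close>

definition cform :: "complex^3 \<Rightarrow> complex \<Rightarrow> complex \<Rightarrow> complex \<Rightarrow> complex" where
  "cform w z1 z2 z3 = w$1 * z1 + w$2 * z2 + w$3 * z3"

definition isotropic :: "complex^3 \<Rightarrow> bool" where
  "isotropic w \<longleftrightarrow> (w$1)^2 + (w$2)^2 + (w$3)^2 = 0"

definition proportional :: "complex^3 \<Rightarrow> complex^3 \<Rightarrow> bool" where
  "proportional w w' \<longleftrightarrow> (\<exists>c. \<forall>i. w$i = c * w'$i)"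

text \<open>\<open>cform w\<close> along the isotropic cone is the quadratic \<open>cone0 w + cone1 w \<mu> + cone2 w \<mu>\<^sup>2\<close>,
  whose discriminant is \<open>4 (w \<bullet> w)\<close>; for isotropic \<open>w\<close> it is the square of
  \<open>sqrt0 w + sqrt1 w \<mu>\<close>.\<close>

definition cone0 :: "complex^3 \<Rightarrow> complex" where "cone0 w = w$1 + \<i> * w$2"
definition cone1 :: "complex^3 \<Rightarrow> complex" where "cone1 w = 2 * w$3"
definition cone2 :: "complex^3 \<Rightarrow> complex" where "cone2 w = \<i> * w$2 - w$1"
definition sqrt1 :: "complex^3 \<Rightarrow> complex" where "sqrt1 w = csqrt (cone2 w)"
definition sqrt0 :: "complex^3 \<Rightarrow> complex" where
  "sqrt0 w = (if cone2 w = 0 then csqrt (cone0 w) else cone1 w / (2 * sqrt1 w))"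

lemma cone_discriminant:
  "(cone1 w)^2 - 4 * cone0 w * cone2 w = 4 * ((w$1)^2 + (w$2)^2 + (w$3)^2)"
  unfolding cone0_def cone1_def cone2_def by (simp add: power2_eq_square algebra_simps)

lemma cone_discriminant_isotropic: "isotropic w \<Longrightarrow> (cone1 w)^2 = 4 * cone0 w * cone2 w"
  using cone_discriminant[of w] unfolding isotropic_def by simp

lemma cform_cone_param:
  "cform w (1 - \<mu>^2) (\<i> * (1 + \<mu>^2)) (2 * \<mu>) = cone0 w + cone1 w * \<mu> + cone2 w * \<mu>^2"
  unfolding cform_def cone0_def cone1_def cone2_def by (simp add: algebra_simps)

lemma cone_param_square:
  assumes "isotropic w"
  shows "cone0 w + cone1 w * \<mu> + cone2 w * \<mu>^2 = (sqrt0 w + sqrt1 w * \<mu>)^2"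
proof (cases "cone2 w = 0")
  case True
  then have "cone1 w = 0" using cone_discriminant_isotropic[OF assms] by simp
  then show ?thesis using True by (simp add: sqrt0_def sqrt1_def)
next
  case False
  have a2: "(sqrt1 w)^2 = cone2 w" by (simp add: sqrt1_def)
  then have a0: "sqrt1 w \<noteq> 0" using False by auto
  have "(sqrt0 w)^2 = cone0 w"
    using False a2 a0 cone_discriminant_isotropic[OF assms]
    by (simp add: sqrt0_def power_divide field_simps)
  moreover have "2 * sqrt1 w * sqrt0 w = cone1 w" using False a0 by (simp add: sqrt0_def)
  ultimately show ?thesis using a2 by (simp add: power2_eq_square algebra_simps)
qed

lemma vec3_from_cone_coeffs:
  "w$1 = (cone0 w - cone2 w) / 2" "w$2 = (cone0 w + cone2 w) / (2 * \<i>)" "w$3 = cone1 w / 2"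
  unfolding cone0_def cone1_def cone2_def by (simp_all add: field_simps)

lemma sqrt_coeffs_not_both_zero:
  assumes "w \<noteq> 0" "isotropic w"
  shows "sqrt1 w \<noteq> 0 \<or> sqrt0 w \<noteq> 0"
proof (cases "cone2 w = 0")
  case True
  then have c1: "cone1 w = 0" using cone_discriminant_isotropic[OF assms(2)] by simp
  have "cone0 w \<noteq> 0"
  proof
    assume "cone0 w = 0"
    then have "w$i = 0" for i
      using exhaust_3[of i] True c1 vec3_from_cone_coeffs[of w] by auto
    then show False using assms(1) by (simp add: vec_eq_iff)
  qed
  then show ?thesis using True by (simp add: sqrt0_def)
qed (simp add: sqrt1_def)

lemma proportional_if_sqrt_coeffs_proportional:
  assumes "isotropic w" "isotropic w'" "w' \<noteq> 0" "sqrt1 w * sqrt0 w' = sqrt1 w' * sqrt0 w"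
  shows "proportional w w'"
proof -
  obtain \<kappa> where \<kappa>: "sqrt1 w = \<kappa> * sqrt1 w'" "sqrt0 w = \<kappa> * sqrt0 w'"
  proof (cases "sqrt1 w' = 0")
    case True
    then have "sqrt0 w' \<noteq> 0" using sqrt_coeffs_not_both_zero[OF assms(3,2)] by auto
    then show ?thesis using True assms(4) by (intro that[of "sqrt0 w / sqrt0 w'"]) auto
  next
    case False
    then show ?thesis using assms(4) by (intro that[of "sqrt1 w / sqrt1 w'"]) (auto simp: field_simps)
  qed
  have "cone0 w + cone1 w * \<mu> + cone2 w * \<mu>^2
      = \<kappa>^2 * (cone0 w' + cone1 w' * \<mu> + cone2 w' * \<mu>^2)" for \<mu>
    unfolding cone_param_square[OF assms(1)] cone_param_square[OF assms(2)] \<kappa>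
    by (simp add: power2_eq_square algebra_simps)
  then have eq: "cone0 w + cone1 w * \<mu> + cone2 w * \<mu>^2
      = \<kappa>^2 * cone0 w' + \<kappa>^2 * cone1 w' * \<mu> + \<kappa>^2 * cone2 w' * \<mu>^2" for \<mu>
    by (simp add: algebra_simps)
  have c0: "cone0 w = \<kappa>^2 * cone0 w'" using eq[of 0] by simp
  have "2 * cone1 w = (cone0 w + cone1 w * 1 + cone2 w * 1^2) - (cone0 w + cone1 w * (-1) + cone2 w * (-1)^2)"
    by simp
  also have "\<dots> = 2 * (\<kappa>^2 * cone1 w')" unfolding eq by (simp add: algebra_simps)
  finally have c1: "cone1 w = \<kappa>^2 * cone1 w'" by simp
  have c2: "cone2 w = \<kappa>^2 * cone2 w'" using eq[of 1] c0 c1 by simp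
  have "w$1 = \<kappa>^2 * w'$1" "w$2 = \<kappa>^2 * w'$2" "w$3 = \<kappa>^2 * w'$3"
    unfolding vec3_from_cone_coeffs c0 c1 c2 by (simp_all add: algebra_simps)
  then have "w$i = \<kappa>^2 * w'$i" for i
    using exhaust_3[of i] by auto
  then show ?thesis unfolding proportional_def by blast
qed

lemma poly_identity_complexify:
  fixes d a b :: "'i \<Rightarrow> complex"
  assumes "\<forall>r::real. (\<Sum>j\<in>J. d j * (a j * of_real r + b j)^n) = 0"
  shows "(\<Sum>j\<in>J. d j * (a j * t + b j)^n) = 0"
proof -
  define p where "p = (\<Sum>j\<in>J. smult (d j) ([:b j, a j:]^n))"
  have p: "poly p z = (\<Sum>j\<in>J. d j * (a j * z + b j)^n)" for z
    unfolding p_def by (simp add: poly_sum algebra_simps)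
  have "p = 0"
  proof (rule ccontr)
    assume "p \<noteq> 0"
    then have "finite {z. poly p z = 0}" by (rule poly_roots_finite)
    moreover have "range (of_real :: real \<Rightarrow> complex) \<subseteq> {z. poly p z = 0}"
      using assms p by auto
    moreover have "infinite (range (of_real :: real \<Rightarrow> complex))"
      using finite_imageD[of of_real "UNIV :: real set"] inj_of_real infinite_UNIV_char_0 by blast
    ultimately show False using finite_subset by blast
  qed
  then show ?thesis using p[of t] by simp
qed

lemma cform_powers_complexify:
  fixes d :: "'i \<Rightarrow> complex"
  assumes "\<forall>x1 x2 x3::real. (\<Sum>j\<in>J. d j * (cform (w j) (of_real x1) (of_real x2) (of_real x3))^n) = 0"
  shows "(\<Sum>j\<in>J. d j * (cform (w j) z1 z2 z3)^n) = 0"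
proof -
  have "(\<Sum>j\<in>J. d j * (cform (w j) z1 (of_real x2) (of_real x3))^n) = 0" for x2 x3 :: real
    using poly_identity_complexify[where a = "\<lambda>j. w j $ 1"
        and b = "\<lambda>j. w j $ 2 * of_real x2 + w j $ 3 * of_real x3" and t = z1]
      assms
    unfolding cform_def by (simp add: algebra_simps)
  then have "(\<Sum>j\<in>J. d j * (cform (w j) z1 z2 (of_real x3))^n) = 0" for x3 :: real
    using poly_identity_complexify[where a = "\<lambda>j. w j $ 2" and b = "\<lambda>j. w j $ 1 * z1 + w j $ 3 * of_real x3" and t = z2]
    unfolding cform_def by (simp add: algebra_simps)
  then show ?thesis
    using poly_identity_complexify[where a = "\<lambda>j. w j $ 3" and b = "\<lambda>j. w j $ 1 * z1 + w j $ 2 * z2" and t = z3]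
    unfolding cform_def by (simp add: algebra_simps)
qed

lemma isotropic_powers_independent:
  fixes d :: "'i \<Rightarrow> complex"
  assumes "finite J" "card J \<le> 2 * n + 1" "\<forall>j\<in>J. isotropic (w j) \<and> w j \<noteq> 0"
    and "\<forall>j\<in>J. \<forall>k\<in>J. j \<noteq> k \<longrightarrow> \<not> proportional (w j) (w k)"
    and "\<forall>x1 x2 x3::real. (\<Sum>j\<in>J. d j * (cform (w j) (of_real x1) (of_real x2) (of_real x3))^n) = 0"
  shows "\<forall>j\<in>J. d j = 0"
proof -
  have "poly (\<Sum>j\<in>J. smult (d j) ([:sqrt0 (w j), sqrt1 (w j):] ^ (2 * n))) \<mu> = 0" for \<mu>
  proof -
    have "(\<Sum>j\<in>J. d j * (cform (w j) (1 - \<mu>^2) (\<i> * (1 + \<mu>^2)) (2 * \<mu>))^n) = 0"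
      by (rule cform_powers_complexify[OF assms(5)])
    moreover have "cform (w j) (1 - \<mu>^2) (\<i> * (1 + \<mu>^2)) (2 * \<mu>) ^ n
        = (sqrt0 (w j) + sqrt1 (w j) * \<mu>) ^ (2 * n)" if "j \<in> J" for j
      using assms(3) that by (simp add: cform_cone_param cone_param_square power_mult)
    ultimately show ?thesis by (simp add: poly_sum algebra_simps)
  qed
  then have "(\<Sum>j\<in>J. smult (d j) ([:sqrt0 (w j), sqrt1 (w j):] ^ (2 * n))) = 0"
    using poly_eq_poly_eq_iff[of _ 0] by (auto simp: fun_eq_iff)
  then show ?thesis
    using linear_powers_independent[of J "2 * n" "\<lambda>j. sqrt1 (w j)" "\<lambda>j. sqrt0 (w j)" d] assms(1-4)
      sqrt_coeffs_not_both_zero proportional_if_sqrt_coeffs_proportional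
    by (metis (no_types, lifting))
qed

section \<open>Orthonormal frames and the forms \<open>h = (u + i v) \<bullet> x\<close>\<close>

definition orthonormal_frame :: "real^3 \<Rightarrow> real^3 \<Rightarrow> real^3 \<Rightarrow> bool" where
  "orthonormal_frame \<omega> u v \<longleftrightarrow>
     norm \<omega> = 1 \<and> norm u = 1 \<and> norm v = 1 \<and> u \<bullet> v = 0 \<and> u \<bullet> \<omega> = 0 \<and> v \<bullet> \<omega> = 0"

lemma orthonormal_frame_expand:
  assumes "orthonormal_frame \<omega> u v"
  shows "x = (x \<bullet> u) *\<^sub>R u + (x \<bullet> v) *\<^sub>R v + (x \<bullet> \<omega>) *\<^sub>R \<omega>"
proof -
  define B where "B = {u, v, \<omega>}"
  have uv: "u \<bullet> v = 0" "u \<bullet> \<omega> = 0" "v \<bullet> \<omega> = 0" and n1: "\<And>b. b \<in> B \<Longrightarrow> norm b = 1"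
    using assms unfolding orthonormal_frame_def B_def by auto
  have d: "u \<noteq> v" "u \<noteq> \<omega>" "v \<noteq> \<omega>"
    using uv n1 unfolding B_def by (auto simp: norm_eq_sqrt_inner)
  have po: "pairwise orthogonal B"
    unfolding B_def pairwise_def orthogonal_def using uv by (auto simp: inner_commute)
  have "0 \<notin> B" using n1 by force
  then have "independent B" using po pairwise_orthogonal_independent by blast
  moreover have "card B = 3" unfolding B_def using d by auto
  ultimately have "UNIV \<subseteq> span B"
    by (intro card_ge_dim_independent) auto
  moreover have "finite B" unfolding B_def by simp
  ultimately have "(\<Sum>b\<in>B. (x \<bullet> b) *\<^sub>R b) = x"
    using orthonormal_basis_expand[OF po n1, of x] by auto
  then show ?thesis unfolding B_def using d by (simp add: add.assoc)
qed

lemma orthonormal_frame_exists: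
  assumes "norm \<omega> = 1"
  obtains u v where "orthonormal_frame \<omega> u v"
proof -
  obtain u0 :: "real^3" where u0: "u0 \<noteq> 0" "u0 \<bullet> \<omega> = 0"
  proof (cases "\<omega>$1 = 0 \<and> \<omega>$2 = 0")
    case True
    show ?thesis
      by (rule that[of "axis 1 1"]) (use True in \<open>auto simp: inner_axis' axis_eq_0_iff\<close>)
  next
    case False
    show ?thesis
    proof (rule that[of "vector [-(\<omega>$2), \<omega>$1, 0]"])
      show "vector [-(\<omega>$2), \<omega>$1, 0] \<noteq> (0::real^3)"
        using False by (auto simp: vec_eq_iff vector_3 forall_3)
      show "vector [-(\<omega>$2), \<omega>$1, 0] \<bullet> \<omega> = 0"
        by (simp add: inner_vec_def sum_3 vector_3)
    qed
  qed
  define u where "u = (1 / norm u0) *\<^sub>R u0"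
  define v where "v = cross3 \<omega> u"
  have nu: "norm u = 1" and uw: "u \<bullet> \<omega> = 0" using u0 by (simp_all add: u_def)
  have uv: "u \<bullet> v = 0" "v \<bullet> \<omega> = 0" unfolding v_def by (simp_all add: dot_cross_self)
  have "(norm v)^2 + (\<omega> \<bullet> u)^2 = (norm \<omega> * norm u)^2" unfolding v_def by (rule norm_cross_dot)
  then have "(norm v)^2 = 1" using nu assms uw by (simp add: inner_commute)
  then have "norm v = 1" using norm_ge_zero[of v] by (auto simp: power2_eq_1_iff)
  then show ?thesis using that[of u v] nu uw uv assms unfolding orthonormal_frame_def by blast
qed

lemma inner_vec3: "(x::real^3) \<bullet> y = x$1 * y$1 + x$2 * y$2 + x$3 * y$3"
  by (simp add: inner_vec_def sum_3)

lemma orthonormal_components: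
  fixes u v :: "real^3"
  assumes "norm u = 1" "norm v = 1" "u \<bullet> v = 0"
  shows "(u$1)^2 + (u$2)^2 + (u$3)^2 = 1" "(v$1)^2 + (v$2)^2 + (v$3)^2 = 1"
    "u$1 * v$1 + u$2 * v$2 + u$3 * v$3 = 0"
proof -
  have "u \<bullet> u = 1" "v \<bullet> v = 1" using assms by (simp_all add: power2_norm_eq_inner[symmetric])
  then show "(u$1)^2 + (u$2)^2 + (u$3)^2 = 1" "(v$1)^2 + (v$2)^2 + (v$3)^2 = 1"
    by (simp_all add: inner_vec3 power2_eq_square)
  show "u$1 * v$1 + u$2 * v$2 + u$3 * v$3 = 0" using assms(3) by (simp add: inner_vec3)
qed

definition cvec :: "real^3 \<Rightarrow> real^3 \<Rightarrow> complex^3" where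
  "cvec u v = (\<chi> i. complex_of_real (u$i) + \<i> * complex_of_real (v$i))"

definition hform :: "real^3 \<Rightarrow> real^3 \<Rightarrow> real^3 \<Rightarrow> complex" where
  "hform u v x = complex_of_real (u \<bullet> x) + \<i> * complex_of_real (v \<bullet> x)"

definition cform_at :: "complex^3 \<Rightarrow> real^3 \<Rightarrow> complex" where
  "cform_at w x = cform w (of_real (x$1)) (of_real (x$2)) (of_real (x$3))"

lemma cform_at_cvec: "cform_at (cvec u v) x = hform u v x"
  unfolding cform_at_def cform_def cvec_def hform_def by (simp add: inner_vec3 algebra_simps)

lemma cnj_hform: "cnj (hform u v x) = hform u (-v) x"
  unfolding hform_def by simp

lemma hform_shift:
  "hform u v (x + t *\<^sub>R y) = hform u v x + of_real t * (of_real (u \<bullet> y) + \<i> * of_real (v \<bullet> y))"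
  unfolding hform_def by (simp add: inner_add_right algebra_simps)

lemma cform_at_proportional: "\<forall>i. w$i = c * w'$i \<Longrightarrow> cform_at w x = c * cform_at w' x"
  unfolding cform_at_def cform_def by (simp add: algebra_simps)

lemma isotropic_cvec:
  assumes "norm u = 1" "norm v = 1" "u \<bullet> v = 0"
  shows "isotropic (cvec u v)"
proof -
  have "((cvec u v)$1)^2 + ((cvec u v)$2)^2 + ((cvec u v)$3)^2
     = of_real (u \<bullet> u) - of_real (v \<bullet> v) + 2 * \<i> * of_real (u \<bullet> v)"
    unfolding cvec_def inner_vec3 by (simp add: power2_eq_square algebra_simps)
  moreover have "u \<bullet> u = 1" "v \<bullet> v = 1"
    using assms by (simp_all add: power2_norm_eq_inner[symmetric])
  ultimately show ?thesis unfolding isotropic_def using assms(3) by simp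
qed

lemma cvec_nonzero:
  assumes "norm u = 1"
  shows "cvec u v \<noteq> 0"
proof
  assume "cvec u v = 0"
  then have "Re (cvec u v $ i) = 0" for i by simp
  then have "u = 0" by (simp add: cvec_def vec_eq_iff)
  then show False using assms by simp
qed

lemma cvec_not_proportional_conj:
  assumes "norm u = 1" "norm v = 1" "u \<bullet> v = 0"
  shows "\<not> proportional (cvec u v) (cvec u (-v))"
proof
  assume "proportional (cvec u v) (cvec u (-v))"
  then obtain c where c: "\<forall>i. cvec u v $ i = c * cvec u (-v) $ i"
    unfolding proportional_def by blast
  have uu: "u \<bullet> u = 1" "v \<bullet> v = 1" and vu: "v \<bullet> u = 0"
    using assms by (simp_all add: power2_norm_eq_inner[symmetric] inner_commute)
  have "hform u v y = c * hform u (-v) y" for y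
    using cform_at_proportional[OF c] by (simp add: cform_at_cvec)
  from this[of u] this[of v] have "c = 1" "\<i> = - c * \<i>"
    using uu vu assms(3) by (simp_all add: hform_def)
  then show False by (simp add: complex_eq_iff)
qed

lemma cvec_not_proportional:
  assumes "orthonormal_frame \<omega> u v" "orthonormal_frame \<omega>' u' v'" "\<omega>' \<noteq> \<omega>" "\<omega>' \<noteq> - \<omega>"
    and "s = v \<or> s = - v" "s' = v' \<or> s' = - v'"
  shows "\<not> proportional (cvec u s) (cvec u' s')"
proof
  assume "proportional (cvec u s) (cvec u' s')"
  then obtain c where c: "\<forall>i. cvec u s $ i = c * cvec u' s' $ i"
    unfolding proportional_def by blast
  have "hform u s \<omega>' = c * hform u' s' \<omega>'"
    using cform_at_proportional[OF c] by (simp add: cform_at_cvec)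
  moreover have "hform u' s' \<omega>' = 0"
    using assms(2,6) unfolding orthonormal_frame_def hform_def by (auto simp: inner_commute)
  ultimately have "hform u s \<omega>' = 0" by simp
  then have "u \<bullet> \<omega>' = 0" "s \<bullet> \<omega>' = 0" by (simp_all add: hform_def complex_eq_iff)
  then have "\<omega>' = (\<omega>' \<bullet> \<omega>) *\<^sub>R \<omega>"
    using orthonormal_frame_expand[OF assms(1), of \<omega>'] assms(5) by (auto simp: inner_commute)
  then have "norm \<omega>' = \<bar>\<omega>' \<bullet> \<omega>\<bar> * norm \<omega>" by (metis norm_scaleR)
  then have "\<omega>' \<bullet> \<omega> = 1 \<or> \<omega>' \<bullet> \<omega> = -1"
    using assms(1,2) unfolding orthonormal_frame_def by auto
  then show False using \<open>\<omega>' = (\<omega>' \<bullet> \<omega>) *\<^sub>R \<omega>\<close> assms(3,4) by auto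
qed

section \<open>Second derivatives along lines\<close>

lemma pderiv_sum: "pderiv (\<Sum>i\<in>A. f i) = (\<Sum>i\<in>A. pderiv (f i))"
  by (induction A rule: infinite_finite_induct) (auto simp: pderiv_add)

lemma deriv2_poly:
  fixes q :: "real poly"
  assumes "\<forall>t. F t = poly q t"
  shows "deriv (deriv F) 0 = poly (pderiv (pderiv q)) 0"
proof -
  have F: "F = poly q" using assms by auto
  have "deriv (poly p) = poly (pderiv p)" for p :: "real poly"
    by (rule ext, rule DERIV_imp_deriv, rule poly_DERIV)
  then show ?thesis unfolding F by simp
qed

lemma pderiv2_linear_power:
  "pderiv (pderiv ([:b, a:] ^ k)) = smult (of_nat (k * (k - 1)) * a^2) ([:b, a:] ^ (k - 2))"
proof -
  have "pderiv (pderiv ([:b, a:] ^ k))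
      = smult (of_nat k * a) (smult (of_nat (k - 1) * a) ([:b, a:] ^ (k - 1 - 1)))"
    by (simp only: pderiv_linear_power pderiv_smult)
  moreover have "of_nat k * a * (of_nat (k - 1) * a) = of_nat (k * (k - 1)) * a^2"
    by (simp only: of_nat_mult power2_eq_square mult_ac)
  moreover have "k - 1 - 1 = k - 2" by simp
  ultimately show ?thesis by (metis smult_smult)
qed

lemma pderiv2_linear_power_at_0:
  "poly (pderiv (pderiv ([:s, p:] ^ k))) 0 = of_nat (k * (k - 1)) * p^2 * (s::'a::idom) ^ (k - 2)"
  by (simp add: pderiv2_linear_power poly_power)

lemma pderiv2_linear_powers_at_0:
  fixes s p s' q :: "'a::idom"
  shows "poly (pderiv (pderiv ([:s, p:] ^ a * [:s', q:] ^ b))) 0 =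
     of_nat (a * (a - 1)) * s ^ (a - 2) * p^2 * s' ^ b
   + 2 * of_nat (a * b) * s ^ (a - 1) * s' ^ (b - 1) * p * q
   + of_nat (b * (b - 1)) * s ^ a * s' ^ (b - 2) * q^2"
proof -
  have "pderiv (pderiv (A * B))
      = A * pderiv (pderiv B) + pderiv A * pderiv B + pderiv A * pderiv B + pderiv (pderiv A) * B"
    for A B :: "'a poly"
    by (simp add: pderiv_mult pderiv_add algebra_simps)
  moreover have "poly (pderiv ([:x, y:] ^ k)) 0 = of_nat k * y * x ^ (k - 1)" for x y :: 'a and k
    by (simp add: pderiv_linear_power poly_power)
  ultimately show ?thesis
    by (simp add: pderiv2_linear_power_at_0 poly_power algebra_simps power2_eq_square)
qed

lemma Re_poly_of_real: "Re (poly p (complex_of_real t)) = poly (map_poly Re p) t"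
  by (induction p) (auto simp: map_poly_pCons)

lemma pderiv_map_poly_Re: "pderiv (map_poly Re p) = map_poly Re (pderiv p)"
  by (rule poly_eqI) (simp add: coeff_pderiv coeff_map_poly)

lemma deriv2_Re_power_line:
  "deriv (deriv (\<lambda>t. Re (c * (\<alpha> + complex_of_real t * \<beta>) ^ n))) 0
     = Re (c * of_nat (n * (n - 1)) * \<beta>^2 * \<alpha> ^ (n - 2))"
proof -
  define p where "p = smult c ([:\<alpha>, \<beta>:] ^ n)"
  have h: "\<forall>t. Re (c * (\<alpha> + complex_of_real t * \<beta>) ^ n) = poly (map_poly Re p) t"
    by (simp only: Re_poly_of_real[symmetric]) (simp add: p_def algebra_simps)
  have "deriv (deriv (\<lambda>t. Re (c * (\<alpha> + complex_of_real t * \<beta>) ^ n))) 0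
      = poly (pderiv (pderiv (map_poly Re p))) 0"
    by (rule deriv2_poly[OF h])
  also have "\<dots> = poly (map_poly Re (pderiv (pderiv p))) 0"
    by (simp add: pderiv_map_poly_Re)
  also have "\<dots> = Re (poly (pderiv (pderiv p)) 0)"
    using Re_poly_of_real[of "pderiv (pderiv p)" 0] by simp
  also have "poly (pderiv (pderiv p)) 0 = c * poly (pderiv (pderiv ([:\<alpha>, \<beta>:] ^ n))) 0"
    unfolding p_def by (simp add: pderiv_smult)
  also have "poly (pderiv (pderiv ([:\<alpha>, \<beta>:] ^ n))) 0 = of_nat (n * (n - 1)) * \<beta>^2 * \<alpha> ^ (n - 2)"
    by (simp add: pderiv2_linear_power_at_0 algebra_simps)
  finally show ?thesis by (simp add: mult.assoc)
qed

section \<open>Homogeneous polynomials and the harmonics \<open>Re (c h\<^sup>n)\<close>\<close>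

definition mon :: "nat \<times> nat \<times> nat \<Rightarrow> real^3 \<Rightarrow> real" where
  "mon \<alpha> x = (case \<alpha> of (a, b, d) \<Rightarrow> x$1 ^ a * x$2 ^ b * x$3 ^ d)"

lemma finite_degs: "finite (degs n)"
proof -
  have "degs n \<subseteq> {..n} \<times> {..n} \<times> {..n}" unfolding degs_def by auto
  then show ?thesis by (rule finite_subset) auto
qed

lemma hom_poly_iff: "hom_poly n f \<longleftrightarrow> (\<exists>c. f = (\<lambda>x. \<Sum>\<alpha>\<in>degs n. c \<alpha> * mon \<alpha> x))"
proof -
  have "(\<Sum>(a, b, d)\<in>degs n. c (a, b, d) * x$1 ^ a * x$2 ^ b * x$3 ^ d) = (\<Sum>\<alpha>\<in>degs n. c \<alpha> * mon \<alpha> x)" for c x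
    by (rule sum.cong) (auto simp: mon_def)
  then show ?thesis unfolding hom_poly_def by simp
qed

lemma hom_poly_intro:
  assumes "A \<subseteq> degs n" "\<forall>x. f x = (\<Sum>\<alpha>\<in>A. c \<alpha> * mon \<alpha> x)"
  shows "hom_poly n f"
proof -
  have "f x = (\<Sum>\<alpha>\<in>degs n. (if \<alpha> \<in> A then c \<alpha> else 0) * mon \<alpha> x)" for x
    using assms finite_degs by (simp add: sum.mono_neutral_cong_right if_distrib)
  then show ?thesis unfolding hom_poly_iff
    by (intro exI[of _ "\<lambda>\<alpha>. if \<alpha> \<in> A then c \<alpha> else 0"]) (simp add: fun_eq_iff)
qed

lemma hom_poly_const: "hom_poly 0 (\<lambda>x. k)"
  by (rule hom_poly_intro[of "{(0,0,0)}" _ _ "\<lambda>_. k"]) (auto simp: degs_def mon_def)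

lemma hom_poly_add:
  assumes "hom_poly n f" "hom_poly n g"
  shows "hom_poly n (\<lambda>x. f x + g x)"
proof -
  obtain c e where "f = (\<lambda>x. \<Sum>\<alpha>\<in>degs n. c \<alpha> * mon \<alpha> x)" "g = (\<lambda>x. \<Sum>\<alpha>\<in>degs n. e \<alpha> * mon \<alpha> x)"
    using assms unfolding hom_poly_iff by blast
  then have "(\<lambda>x. f x + g x) = (\<lambda>x. \<Sum>\<alpha>\<in>degs n. (c \<alpha> + e \<alpha>) * mon \<alpha> x)"
    by (simp add: sum.distrib algebra_simps)
  then show ?thesis unfolding hom_poly_iff by (intro exI[of _ "\<lambda>\<alpha>. c \<alpha> + e \<alpha>"]) simp
qed

lemma hom_poly_scale:
  assumes "hom_poly n f"
  shows "hom_poly n (\<lambda>x. k * f x)"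
proof -
  obtain c where "f = (\<lambda>x. \<Sum>\<alpha>\<in>degs n. c \<alpha> * mon \<alpha> x)"
    using assms unfolding hom_poly_iff by blast
  then have "(\<lambda>x. k * f x) = (\<lambda>x. \<Sum>\<alpha>\<in>degs n. (k * c \<alpha>) * mon \<alpha> x)"
    by (simp add: sum_distrib_left algebra_simps)
  then show ?thesis unfolding hom_poly_iff by (intro exI[of _ "\<lambda>\<alpha>. k * c \<alpha>"]) simp
qed

definition exp_inc :: "3 \<Rightarrow> nat \<times> nat \<times> nat \<Rightarrow> nat \<times> nat \<times> nat" where
  "exp_inc i \<alpha> = (case \<alpha> of (a, b, d) \<Rightarrow> if i = 1 then (a + 1, b, d) else if i = 2 then (a, b + 1, d) else (a, b, d + 1))"

definition exp_dec :: "3 \<Rightarrow> nat \<times> nat \<times> nat \<Rightarrow> nat \<times> nat \<times> nat" where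
  "exp_dec i \<alpha> = (case \<alpha> of (a, b, d) \<Rightarrow> if i = 1 then (a - 1, b, d) else if i = 2 then (a, b - 1, d) else (a, b, d - 1))"

lemma exp_dec_inc: "exp_dec i (exp_inc i \<alpha>) = \<alpha>"
  by (cases \<alpha>) (auto simp: exp_inc_def exp_dec_def)

lemma exp_inc_degs: "\<alpha> \<in> degs n \<Longrightarrow> exp_inc i \<alpha> \<in> degs (Suc n)"
  by (cases \<alpha>) (auto simp: exp_inc_def degs_def)

lemma mon_exp_inc: "mon (exp_inc i \<alpha>) x = x$i * mon \<alpha> x"
  using exhaust_3[of i] by (cases \<alpha>) (auto simp: exp_inc_def mon_def)

lemma hom_poly_mult_coord:
  assumes "hom_poly n f"
  shows "hom_poly (Suc n) (\<lambda>x. x$i * f x)"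
proof -
  obtain c where f: "f = (\<lambda>x. \<Sum>\<alpha>\<in>degs n. c \<alpha> * mon \<alpha> x)"
    using assms unfolding hom_poly_iff by blast
  have inj: "inj_on (exp_inc i) (degs n)" by (metis inj_on_inverseI exp_dec_inc)
  show ?thesis
  proof (rule hom_poly_intro[where A = "exp_inc i ` degs n" and c = "\<lambda>\<beta>. c (exp_dec i \<beta>)"])
    show "exp_inc i ` degs n \<subseteq> degs (Suc n)" using exp_inc_degs by auto
    show "\<forall>x. x $ i * f x = (\<Sum>\<alpha>\<in>exp_inc i ` degs n. c (exp_dec i \<alpha>) * mon \<alpha> x)"
      unfolding f by (simp add: sum.reindex[OF inj] exp_dec_inc mon_exp_inc sum_distrib_left algebra_simps)
  qed
qed

lemma hom_poly_mult_linear: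
  assumes "hom_poly n f"
  shows "hom_poly (Suc n) (\<lambda>x. (w \<bullet> x) * f x)"
proof -
  have e: "(\<lambda>x. (w \<bullet> x) * f x) = (\<lambda>x. (w$1 * (x$1 * f x) + w$2 * (x$2 * f x)) + w$3 * (x$3 * f x))"
    by (auto simp: inner_vec_def sum_3 algebra_simps)
  show ?thesis unfolding e
    by (intro hom_poly_add hom_poly_scale hom_poly_mult_coord assms)
qed

definition axial_harmonic :: "nat \<Rightarrow> real^3 \<Rightarrow> real^3 \<Rightarrow> complex \<Rightarrow> real^3 \<Rightarrow> real" where
  "axial_harmonic n u v c x = Re (c * hform u v x ^ n)"

lemma hom_poly_axial_harmonic:
  "hom_poly n (axial_harmonic n u v c) \<and> hom_poly n (\<lambda>x. Im (c * hform u v x ^ n))"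
proof (induction n)
  case 0
  then show ?case unfolding axial_harmonic_def by (simp add: hom_poly_const)
next
  case (Suc n)
  have e1: "axial_harmonic (Suc n) u v c
      = (\<lambda>x. (u \<bullet> x) * axial_harmonic n u v c x + (-1) * ((v \<bullet> x) * Im (c * hform u v x ^ n)))"
    by (auto simp: axial_harmonic_def hform_def algebra_simps)
  have e2: "(\<lambda>x. Im (c * hform u v x ^ Suc n))
      = (\<lambda>x. (v \<bullet> x) * axial_harmonic n u v c x + (u \<bullet> x) * Im (c * hform u v x ^ n))"
    by (auto simp: axial_harmonic_def hform_def algebra_simps)
  show ?case unfolding e1 e2 using Suc
    by (intro conjI hom_poly_add hom_poly_scale hom_poly_mult_linear) auto
qed

lemma laplacian_axial_harmonic:
  assumes "norm u = 1" "norm v = 1" "u \<bullet> v = 0"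
  shows "laplacian (axial_harmonic n u v c) x = 0"
proof -
  define \<beta> where "\<beta> i = cvec u v $ i" for i
  have d: "deriv (deriv (\<lambda>t. axial_harmonic n u v c (x + t *\<^sub>R axis i 1))) 0
      = Re (c * of_nat (n * (n - 1)) * (\<beta> i)^2 * (hform u v x) ^ (n - 2))" for i
  proof -
    have "(\<lambda>t. axial_harmonic n u v c (x + t *\<^sub>R axis i 1))
        = (\<lambda>t. Re (c * (hform u v x + complex_of_real t * \<beta> i) ^ n))"
      by (auto simp: axial_harmonic_def hform_shift \<beta>_def cvec_def inner_axis)
    then show ?thesis by (simp only: deriv2_Re_power_line)
  qed
  have s0: "(\<beta> 1)^2 + (\<beta> 2)^2 + (\<beta> 3)^2 = 0"
    using isotropic_cvec[OF assms] unfolding isotropic_def \<beta>_def .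
  define K where "K = c * of_nat (n * (n - 1))"
  define h where "h = (hform u v x) ^ (n - 2)"
  have "Re (K * (\<beta> 1)^2 * h) + Re (K * (\<beta> 2)^2 * h) + Re (K * (\<beta> 3)^2 * h)
      = Re (K * h * ((\<beta> 1)^2 + (\<beta> 2)^2 + (\<beta> 3)^2))"
    by (simp only: plus_complex.sel(1)[symmetric]) (simp add: algebra_simps)
  then show ?thesis
    unfolding laplacian_def sum_3 d K_def[symmetric] h_def[symmetric] using s0 by simp
qed

lemma axial_harmonic_axial:
  assumes "u \<bullet> \<omega> = 0" "v \<bullet> \<omega> = 0"
  shows "axial \<omega> (axial_harmonic n u v c)"
  unfolding axial_def axial_harmonic_def using assms by (simp add: hform_shift inner_commute)

lemma axial_harmonic_in_harmonic_axial:
  assumes "orthonormal_frame \<omega> u v"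
  shows "axial_harmonic n u v c \<in> harmonic_axial n \<omega>"
  using assms hom_poly_axial_harmonic laplacian_axial_harmonic axial_harmonic_axial
  unfolding harmonic_axial_def harmonic_hom_def orthonormal_frame_def by auto

section \<open>Axial harmonics are spanned by \<open>Re (h\<^sup>n)\<close> and \<open>Im (h\<^sup>n)\<close>\<close>

definition binary_form :: "nat \<Rightarrow> (real \<Rightarrow> real \<Rightarrow> real) \<Rightarrow> bool" where
  "binary_form n g \<longleftrightarrow> (\<exists>\<gamma>. \<forall>s t. g s t = (\<Sum>m\<le>n. \<gamma> m * s ^ m * t ^ (n - m)))"

lemma binary_form_const: "binary_form 0 (\<lambda>s t. k)"
  unfolding binary_form_def by (intro exI[of _ "\<lambda>_. k"]) simp

lemma binary_form_add: 
  assumes "binary_form n f" "binary_form n g" shows "binary_form n (\<lambda>s t. f s t + g s t)"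
proof -
  obtain a b where a: "\<forall>s t. f s t = (\<Sum>m\<le>n. a m * s ^ m * t ^ (n - m))"
    and b: "\<forall>s t. g s t = (\<Sum>m\<le>n. b m * s ^ m * t ^ (n - m))"
    using assms unfolding binary_form_def by blast
  show ?thesis unfolding binary_form_def
    by (rule exI[of _ "\<lambda>m. a m + b m"]) (simp add: a b sum.distrib algebra_simps)
qed

lemma binary_form_scale:
  assumes "binary_form n f" shows "binary_form n (\<lambda>s t. k * f s t)"
proof -
  obtain a where a: "\<forall>s t. f s t = (\<Sum>m\<le>n. a m * s ^ m * t ^ (n - m))"
    using assms unfolding binary_form_def by blast
  show ?thesis unfolding binary_form_def
    by (rule exI[of _ "\<lambda>m. k * a m"]) (simp add: a sum_distrib_left algebra_simps)
qed

lemma binary_form_mult_linear: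
  assumes "binary_form n f" shows "binary_form (Suc n) (\<lambda>s t. (p * s + q * t) * f s t)"
proof -
  obtain a where a: "\<forall>s t. f s t = (\<Sum>m\<le>n. a m * s ^ m * t ^ (n - m))"
    using assms unfolding binary_form_def by blast
  define g where "g k = (if k \<ge> 1 then p * a (k - 1) else 0) + (if k \<le> n then q * a k else 0)" for k
  have "(p * s + q * t) * f s t = (\<Sum>k\<le>Suc n. g k * s ^ k * t ^ (Suc n - k))" for s t
  proof -
    have e1: "(\<Sum>k\<le>Suc n. (if k \<ge> 1 then p * a (k - 1) else 0) * s ^ k * t ^ (Suc n - k))
        = (\<Sum>m\<le>n. p * s * (a m * s ^ m * t ^ (n - m)))"
      by (subst sum.atMost_Suc_shift) (simp add: algebra_simps)
    have e2: "(\<Sum>k\<le>Suc n. (if k \<le> n then q * a k else 0) * s ^ k * t ^ (Suc n - k))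
        = (\<Sum>m\<le>n. q * t * (a m * s ^ m * t ^ (n - m)))"
      by (simp add: Suc_diff_le algebra_simps)
    have "(\<Sum>k\<le>Suc n. g k * s ^ k * t ^ (Suc n - k))
       = (\<Sum>k\<le>Suc n. (if k \<ge> 1 then p * a (k - 1) else 0) * s ^ k * t ^ (Suc n - k))
       + (\<Sum>k\<le>Suc n. (if k \<le> n then q * a k else 0) * s ^ k * t ^ (Suc n - k))"
      unfolding g_def by (simp add: sum.distrib algebra_simps)
    also have "\<dots> = (p * s + q * t) * f s t"
      unfolding e1 e2 a[rule_format] by (simp add: sum_distrib_left sum.distrib algebra_simps)
    finally show ?thesis by simp
  qed
  then show ?thesis unfolding binary_form_def by blast
qed

lemma binary_form_mult_power:
  assumes "binary_form n f" shows "binary_form (k + n) (\<lambda>s t. (p * s + q * t) ^ k * f s t)"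
proof (induction k)
  case 0 then show ?case using assms by simp
next
  case (Suc k)
  have "binary_form (Suc (k + n)) (\<lambda>s t. (p * s + q * t) * ((p * s + q * t) ^ k * f s t))"
    by (rule binary_form_mult_linear[OF Suc])
  then show ?case by (simp add: algebra_simps)
qed

lemma binary_form_sum:
  assumes "finite A" "\<forall>\<alpha>\<in>A. binary_form n (g \<alpha>)"
  shows "binary_form n (\<lambda>s t. \<Sum>\<alpha>\<in>A. g \<alpha> s t)"
  using assms
proof (induction A rule: finite_induct)
  case empty
  show ?case unfolding binary_form_def by (intro exI[of _ "\<lambda>_. 0"]) simp
next
  case (insert x F)
  then show ?case by (simp add: binary_form_add)
qed

lemma hom_poly_restrict_plane:
  assumes "hom_poly n f"
  shows "binary_form n (\<lambda>s t. f (s *\<^sub>R u + t *\<^sub>R v))"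
proof -
  obtain c where f: "f = (\<lambda>x. \<Sum>\<alpha>\<in>degs n. c \<alpha> * mon \<alpha> x)"
    using assms unfolding hom_poly_iff by blast
  have m: "binary_form n (\<lambda>s t. mon \<alpha> (s *\<^sub>R u + t *\<^sub>R v))" if "\<alpha> \<in> degs n" for \<alpha>
  proof -
    obtain a b d where \<alpha>: "\<alpha> = (a, b, d)" by (cases \<alpha>)
    then have n: "n = a + (b + (d + 0))" using that by (simp add: degs_def)
    have "binary_form (a + (b + (d + 0))) (\<lambda>s t. (u$1 * s + v$1 * t) ^ a * ((u$2 * s + v$2 * t) ^ b * ((u$3 * s + v$3 * t) ^ d * 1)))"
      by (intro binary_form_mult_power binary_form_const)
    then show ?thesis unfolding n \<alpha> mon_def by (simp add: algebra_simps)
  qed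
  show ?thesis unfolding f
    by (intro binary_form_sum finite_degs ballI binary_form_scale m)
qed

lemma axial_hom_poly_frame_expansion:
  assumes "orthonormal_frame \<omega> u v" "hom_poly n f" "axial \<omega> f"
  obtains \<gamma> where "\<forall>x. f x = (\<Sum>m\<le>n. \<gamma> m * (u \<bullet> x) ^ m * (v \<bullet> x) ^ (n - m))"
proof -
  obtain \<gamma> where \<gamma>: "\<forall>s t. f (s *\<^sub>R u + t *\<^sub>R v) = (\<Sum>m\<le>n. \<gamma> m * s ^ m * t ^ (n - m))"
    using hom_poly_restrict_plane[OF assms(2), of u v] unfolding binary_form_def by blast
  have "f x = (\<Sum>m\<le>n. \<gamma> m * (u \<bullet> x) ^ m * (v \<bullet> x) ^ (n - m))" for x
  proof -
    have "x = ((x \<bullet> u) *\<^sub>R u + (x \<bullet> v) *\<^sub>R v) + (x \<bullet> \<omega>) *\<^sub>R \<omega>"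
      using orthonormal_frame_expand[OF assms(1)] by (simp add: add.assoc)
    then have "f x = f ((x \<bullet> u) *\<^sub>R u + (x \<bullet> v) *\<^sub>R v)"
      using assms(3) unfolding axial_def by metis
    then show ?thesis using \<gamma> by (simp add: inner_commute)
  qed
  then show ?thesis using that by blast
qed

lemma deriv2_axis_frame_expansion:
  assumes "\<forall>x. f x = (\<Sum>m\<le>n. \<gamma> m * (u \<bullet> x) ^ m * (v \<bullet> x) ^ (n - m))"
  shows "deriv (deriv (\<lambda>t. f (x + t *\<^sub>R axis i 1))) 0 = (\<Sum>m\<le>n. \<gamma> m *
      (of_nat (m * (m - 1)) * (u \<bullet> x) ^ (m - 2) * (u$i)^2 * (v \<bullet> x) ^ (n - m)
       + 2 * of_nat (m * (n - m)) * (u \<bullet> x) ^ (m - 1) * (v \<bullet> x) ^ (n - m - 1) * u$i * v$i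
       + of_nat ((n - m) * (n - m - 1)) * (u \<bullet> x) ^ m * (v \<bullet> x) ^ (n - m - 2) * (v$i)^2))"
proof -
  define q where "q = (\<Sum>m\<le>n. smult (\<gamma> m) ([:u \<bullet> x, u$i:] ^ m * [:v \<bullet> x, v$i:] ^ (n - m)))"
  have "\<forall>t. f (x + t *\<^sub>R axis i 1) = poly q t"
    using assms by (simp add: q_def poly_sum poly_power inner_add_right inner_axis algebra_simps)
  then have "deriv (deriv (\<lambda>t. f (x + t *\<^sub>R axis i 1))) 0 = poly (pderiv (pderiv q)) 0"
    by (rule deriv2_poly)
  also have "\<dots> = (\<Sum>m\<le>n. \<gamma> m * poly (pderiv (pderiv ([:u \<bullet> x, u$i:] ^ m * [:v \<bullet> x, v$i:] ^ (n - m)))) 0)"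
    unfolding q_def by (simp add: pderiv_sum pderiv_smult poly_sum)
  finally show ?thesis unfolding pderiv2_linear_powers_at_0 .
qed

lemma laplacian_frame_expansion:
  assumes "norm u = 1" "norm v = 1" "u \<bullet> v = 0"
    and "\<forall>x. f x = (\<Sum>m\<le>n. \<gamma> m * (u \<bullet> x) ^ m * (v \<bullet> x) ^ (n - m))"
  shows "laplacian f x = (\<Sum>m\<le>n. \<gamma> m * (of_nat (m * (m - 1)) * (u \<bullet> x) ^ (m - 2) * (v \<bullet> x) ^ (n - m)
            + of_nat ((n - m) * (n - m - 1)) * (u \<bullet> x) ^ m * (v \<bullet> x) ^ (n - m - 2)))"
proof -
  note components = orthonormal_components[OF assms(1-3)]
  define s where "s = u \<bullet> x"
  define s' where "s' = v \<bullet> x"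
  have "laplacian f x = (\<Sum>m\<le>n. \<gamma> m * (
        of_nat (m * (m - 1)) * s ^ (m - 2) * s' ^ (n - m) * ((u$1)^2 + (u$2)^2 + (u$3)^2)
      + 2 * of_nat (m * (n - m)) * s ^ (m - 1) * s' ^ (n - m - 1) * (u$1 * v$1 + u$2 * v$2 + u$3 * v$3)
      + of_nat ((n - m) * (n - m - 1)) * s ^ m * s' ^ (n - m - 2) * ((v$1)^2 + (v$2)^2 + (v$3)^2)))"
    unfolding laplacian_def sum_3 deriv2_axis_frame_expansion[OF assms(4)] s_def s'_def
    by (simp add: sum.distrib[symmetric] algebra_simps)
  then show ?thesis unfolding components s_def s'_def by simp
qed
text \<open>The condition for \<open>\<Sum>\<^sub>m \<gamma>\<^sub>m s\<^sup>m t\<^sup>n\<^sup>-\<^sup>m\<close> to be harmonic in orthonormal coordinates \<open>s, t\<close>.\<close>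

definition harmonic_recurrence :: "nat \<Rightarrow> (nat \<Rightarrow> real) \<Rightarrow> bool" where
  "harmonic_recurrence n \<gamma> \<longleftrightarrow> (\<forall>k. k + 2 \<le> n \<longrightarrow>
     of_nat ((k + 2) * (k + 1)) * \<gamma> (k + 2) + of_nat ((n - k) * (n - k - 1)) * \<gamma> k = 0)"

lemma harmonic_recurrence_lincomb:
  assumes "harmonic_recurrence n \<gamma>" "harmonic_recurrence n \<delta>"
  shows "harmonic_recurrence n (\<lambda>m. a * \<gamma> m + b * \<delta> m)"
  unfolding harmonic_recurrence_def
proof (intro allI impI)
  fix k assume "k + 2 \<le> n"
  define A :: real where "A = of_nat ((k + 2) * (k + 1))"
  define B :: real where "B = of_nat ((n - k) * (n - k - 1))"
  have "A * \<gamma> (k + 2) + B * \<gamma> k = 0" "A * \<delta> (k + 2) + B * \<delta> k = 0"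
    using assms \<open>k + 2 \<le> n\<close> unfolding harmonic_recurrence_def A_def B_def by blast+
  moreover have "A * (a * \<gamma> (k + 2) + b * \<delta> (k + 2)) + B * (a * \<gamma> k + b * \<delta> k)
      = a * (A * \<gamma> (k + 2) + B * \<gamma> k) + b * (A * \<delta> (k + 2) + B * \<delta> k)"
    by (simp add: algebra_simps)
  ultimately show "of_nat ((k + 2) * (k + 1)) * (a * \<gamma> (k + 2) + b * \<delta> (k + 2))
      + of_nat ((n - k) * (n - k - 1)) * (a * \<gamma> k + b * \<delta> k) = 0"
    unfolding A_def B_def by simp
qed

lemma harmonic_recurrence_unique:
  assumes "harmonic_recurrence n \<gamma>" "harmonic_recurrence n \<delta>"
    and "\<gamma> n = \<delta> n" "\<gamma> (n - 1) = \<delta> (n - 1)" "m \<le> n"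
  shows "\<gamma> m = \<delta> m"
  using assms(5)
proof (induction "n - m" arbitrary: m rule: less_induct)
  case less
  show ?case
  proof (cases "m + 2 \<le> n")
    case True
    define A :: real where "A = of_nat ((m + 2) * (m + 1))"
    define B :: real where "B = of_nat ((n - m) * (n - m - 1))"
    have "A * \<gamma> (m + 2) + B * \<gamma> m = 0" "A * \<delta> (m + 2) + B * \<delta> m = 0"
      using assms(1,2) True unfolding harmonic_recurrence_def A_def B_def by blast+
    moreover have "\<gamma> (m + 2) = \<delta> (m + 2)" using less.hyps True by simp
    ultimately have "B * \<gamma> m = B * \<delta> m" by (metis add_left_cancel)
    moreover have "B \<noteq> 0" using True unfolding B_def by simp
    ultimately show ?thesis by simp
  next
    case False
    then have "m = n \<or> m = n - 1" using less.prems by auto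
    then show ?thesis using assms(3,4) by auto
  qed
qed

lemma binary_coeff_recurrence:
  fixes \<gamma> :: "nat \<Rightarrow> real"
  assumes "\<forall>s. (\<Sum>m\<le>n. \<gamma> m * (of_nat (m * (m - 1)) * s ^ (m - 2) + of_nat ((n - m) * (n - m - 1)) * s ^ m)) = 0"
  shows "harmonic_recurrence n \<gamma>"
proof -
  define P where "P = (\<Sum>m\<le>n. monom (\<gamma> m) m)"
  define Q where "Q = (\<Sum>m\<le>n. monom (\<gamma> m * of_nat ((n - m) * (n - m - 1))) m)"
  have pm: "poly (pderiv (pderiv (monom a m))) s = a * of_nat (m * (m - 1)) * s ^ (m - 2)"
    for a :: real and m s
    by (simp add: pderiv_monom poly_monom of_nat_mult mult_ac diff_diff_left numeral_2_eq_2)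
  have "poly (pderiv (pderiv P) + Q) s = 0" for s
  proof -
    have "poly (pderiv (pderiv P) + Q) s
        = (\<Sum>m\<le>n. \<gamma> m * (of_nat (m * (m - 1)) * s ^ (m - 2) + of_nat ((n - m) * (n - m - 1)) * s ^ m))"
      unfolding P_def Q_def poly_add pderiv_sum poly_sum pm poly_monom
      by (simp add: sum.distrib[symmetric] distrib_left mult.assoc)
    then show ?thesis using assms by simp
  qed
  then have R: "pderiv (pderiv P) + Q = 0"
    using poly_eq_poly_eq_iff[of "pderiv (pderiv P) + Q" 0] by (auto simp: fun_eq_iff)
  have cP: "coeff P j = (if j \<le> n then \<gamma> j else 0)" for j
    unfolding P_def by (simp add: coeff_sum coeff_monom)
  have cQ: "coeff Q j = (if j \<le> n then \<gamma> j * of_nat ((n - j) * (n - j - 1)) else 0)" for j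
    unfolding Q_def by (simp add: coeff_sum coeff_monom)
  show ?thesis unfolding harmonic_recurrence_def
  proof (intro allI impI)
    fix k assume k: "k + 2 \<le> n"
    have "coeff (pderiv (pderiv P) + Q) k = 0" using R by simp
    then show "of_nat ((k + 2) * (k + 1)) * \<gamma> (k + 2) + of_nat ((n - k) * (n - k - 1)) * \<gamma> k = 0"
      using k by (simp add: coeff_pderiv cP cQ algebra_simps)
  qed
qed

lemma harmonic_frame_coeff_recurrence:
  assumes "norm u = 1" "norm v = 1" "u \<bullet> v = 0"
    and "\<forall>x. f x = (\<Sum>m\<le>n. \<gamma> m * (u \<bullet> x) ^ m * (v \<bullet> x) ^ (n - m))"
    and "\<forall>x. laplacian f x = 0"
  shows "harmonic_recurrence n \<gamma>"
proof (rule binary_coeff_recurrence, rule allI)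
  fix s :: real
  define x where "x = s *\<^sub>R u + v"
  have "u \<bullet> u = 1" "v \<bullet> v = 1" using assms by (simp_all add: power2_norm_eq_inner[symmetric])
  then have "u \<bullet> x = s" "v \<bullet> x = 1" unfolding x_def using assms(3)
    by (simp_all add: inner_add_right inner_commute)
  then show "(\<Sum>m\<le>n. \<gamma> m * (of_nat (m * (m - 1)) * s ^ (m - 2) + of_nat ((n - m) * (n - m - 1)) * s ^ m)) = 0"
    using laplacian_frame_expansion[OF assms(1-4), of x] assms(5) by simp
qed

lemma axial_harmonic_frame_expansion:
  "axial_harmonic n u v c x
     = (\<Sum>m\<le>n. Re (c * of_nat (n choose m) * \<i> ^ (n - m)) * (u \<bullet> x) ^ m * (v \<bullet> x) ^ (n - m))"
proof -
  have "hform u v x ^ n = (\<Sum>m\<le>n. of_nat (n choose m) * complex_of_real (u \<bullet> x) ^ m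
      * (\<i> * complex_of_real (v \<bullet> x)) ^ (n - m))"
    unfolding hform_def by (rule binomial_ring)
  then have "c * hform u v x ^ n = (\<Sum>m\<le>n. (c * of_nat (n choose m) * \<i> ^ (n - m))
      * complex_of_real ((u \<bullet> x) ^ m * (v \<bullet> x) ^ (n - m)))"
    by (simp add: sum_distrib_left power_mult_distrib algebra_simps)
  then show ?thesis unfolding axial_harmonic_def by (simp add: Re_sum algebra_simps)
qed

lemma axial_harmonic_recurrence:
  assumes "orthonormal_frame \<omega> u v"
  shows "harmonic_recurrence n (\<lambda>m. Re (c * of_nat (n choose m) * \<i> ^ (n - m)))"
  using assms axial_harmonic_in_harmonic_axial[OF assms, of n c]
  by (intro harmonic_frame_coeff_recurrence[of u v "axial_harmonic n u v c"])
    (auto simp: orthonormal_frame_def harmonic_axial_def harmonic_hom_def axial_harmonic_frame_expansion)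

interpretation fspace: vector_space fscale
  by unfold_locales (auto simp: fscale_def fun_eq_iff algebra_simps)

lemma harmonic_axial_in_span:
  assumes "orthonormal_frame \<omega> u v" "f \<in> harmonic_axial n \<omega>"
  shows "f \<in> fspace.span {axial_harmonic n u v 1, axial_harmonic n u v (- \<i>)}"
proof -
  obtain \<gamma> where f: "\<forall>x. f x = (\<Sum>m\<le>n. \<gamma> m * (u \<bullet> x) ^ m * (v \<bullet> x) ^ (n - m))"
    using axial_hom_poly_frame_expansion[OF assms(1)] assms(2)
    unfolding harmonic_axial_def harmonic_hom_def by blast
  have rec: "harmonic_recurrence n \<gamma>"
    using assms f unfolding orthonormal_frame_def harmonic_axial_def harmonic_hom_def
    by (intro harmonic_frame_coeff_recurrence[of u v f]) auto
  define g1 where "g1 m = Re (1 * of_nat (n choose m) * \<i> ^ (n - m))" for m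
  define g2 where "g2 m = Re ((- \<i>) * of_nat (n choose m) * \<i> ^ (n - m))" for m
  define a where "a = \<gamma> n"
  define b where "b = \<gamma> (n - 1) / of_nat n"
  have "\<gamma> m = a * g1 m + b * g2 m" if "m \<le> n" for m
  proof (rule harmonic_recurrence_unique[OF rec _ _ _ that])
    show "harmonic_recurrence n (\<lambda>m. a * g1 m + b * g2 m)"
      unfolding g1_def g2_def by (intro harmonic_recurrence_lincomb axial_harmonic_recurrence[OF assms(1)])
    show "\<gamma> n = a * g1 n + b * g2 n" by (simp add: a_def g1_def g2_def)
    show "\<gamma> (n - 1) = a * g1 (n - 1) + b * g2 (n - 1)"
    proof (cases n)
      case (Suc k)
      then have "n choose (n - 1) = n" using binomial_symmetric[of "n - 1" n] by simp
      then show ?thesis using Suc by (simp add: a_def b_def g1_def g2_def field_simps)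
    qed (simp add: a_def g1_def g2_def)
  qed
  then have "f x = a * axial_harmonic n u v 1 x + b * axial_harmonic n u v (- \<i>) x" for x
    unfolding f[rule_format] axial_harmonic_frame_expansion g1_def g2_def
    by (simp add: sum_distrib_left sum.distrib algebra_simps)
  then have "f = fscale a (axial_harmonic n u v 1) + fscale b (axial_harmonic n u v (- \<i>))"
    by (auto simp: fun_eq_iff fscale_def)
  then show ?thesis by (simp add: fspace.span_add fspace.span_scale fspace.span_base)
qed

section \<open>Harmonic polynomials are determined by \<open>2n + 1\<close> coefficients\<close>

lemma sum_degs_split:
  "(\<Sum>\<alpha>\<in>degs m. g \<alpha>) = (\<Sum>a\<le>m. \<Sum>b\<le>m - a. g (a, b, m - a - b))"
proof -
  have "(\<Sum>\<alpha>\<in>degs m. g \<alpha>) = (\<Sum>p\<in>Sigma {..m} (\<lambda>a. {..m - a}). g (fst p, snd p, m - fst p - snd p))"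
    by (rule sum.reindex_bij_witness[where i = "\<lambda>p. (fst p, snd p, m - fst p - snd p)" and j = "\<lambda>(a, b, d). (a, b)"])
       (auto simp: degs_def)
  also have "\<dots> = (\<Sum>a\<le>m. \<Sum>b\<le>m - a. g (a, b, m - a - b))"
    by (subst sum.Sigma) (auto simp: split_def)
  finally show ?thesis .
qed

lemma mon_independent:
  assumes "\<forall>x. (\<Sum>\<alpha>\<in>degs m. e \<alpha> * mon \<alpha> x) = 0"
  shows "\<forall>\<alpha>\<in>degs m. e \<alpha> = 0"
proof -
  have z: "(\<Sum>a\<le>m. (\<Sum>b\<le>m - a. e (a, b, m - a - b) * t ^ b) * s ^ a) = 0" for s t :: real
  proof -
    have "(\<Sum>\<alpha>\<in>degs m. e \<alpha> * mon \<alpha> (vector [s, t, 1])) = 0" using assms by blast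
    then show ?thesis
      unfolding sum_degs_split by (simp add: mon_def vector_3 sum_distrib_left sum_distrib_right algebra_simps)
  qed
  have z1: "\<forall>a\<le>m. (\<Sum>b\<le>m - a. e (a, b, m - a - b) * t ^ b) = 0" for t :: real
  proof -
    have "\<forall>s. (\<Sum>a\<le>m. (\<Sum>b\<le>m - a. e (a, b, m - a - b) * t ^ b) * s ^ a) = 0"
      using z by blast
    then show ?thesis
      by (subst (asm) polyfun_eq_0[of "\<lambda>a. \<Sum>b\<le>m - a. e (a, b, m - a - b) * t ^ b" m])
  qed
  have z2: "e (a, b, m - a - b) = 0" if "a \<le> m" "b \<le> m - a" for a b
  proof -
    have "\<forall>t. (\<Sum>b\<le>m - a. e (a, b, m - a - b) * t ^ b) = (0::real)"
      using z1 that by blast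
    then have "\<forall>b'\<le>m - a. e (a, b', m - a - b') = 0"
      by (subst (asm) polyfun_eq_0[of "\<lambda>b. e (a, b, m - a - b)" "m - a"])
    then show ?thesis using that by blast
  qed
  show ?thesis
  proof
    fix \<alpha> assume "\<alpha> \<in> degs m"
    then obtain a b d where "\<alpha> = (a, b, d)" "a + b + d = m" unfolding degs_def by auto
    moreover have "m - a - b = d" "a \<le> m" "b \<le> m - a" using calculation by auto
    ultimately show "e \<alpha> = 0" using z2[of a b] by simp
  qed
qed

definition exponent :: "3 \<Rightarrow> nat \<times> nat \<times> nat \<Rightarrow> nat" where
  "exponent i \<alpha> = (case \<alpha> of (a, b, d) \<Rightarrow> if i = 1 then a else if i = 2 then b else d)"

definition exponent_clear :: "3 \<Rightarrow> nat \<times> nat \<times> nat \<Rightarrow> nat \<times> nat \<times> nat" where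
  "exponent_clear i \<alpha> = (case \<alpha> of (a, b, d) \<Rightarrow> if i = 1 then (0, b, d) else if i = 2 then (a, 0, d) else (a, b, 0))"

lemma mon_axis: "mon \<alpha> (x + t *\<^sub>R axis i 1) = (x$i + t) ^ (exponent i \<alpha>) * mon (exponent_clear i \<alpha>) x"
  using exhaust_3[of i] by (cases \<alpha>) (auto simp: mon_def exponent_def exponent_clear_def axis_def)

lemma mon_exp_dec2: "mon (exp_dec i (exp_dec i \<alpha>)) x = x$i ^ (exponent i \<alpha> - 2) * mon (exponent_clear i \<alpha>) x"
  using exhaust_3[of i] by (cases \<alpha>) (auto simp: mon_def exponent_def exponent_clear_def exp_dec_def diff_diff_left numeral_2_eq_2)

lemma exponent_exp_inc: "exponent i (exp_inc i \<alpha>) = exponent i \<alpha> + 1"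
  using exhaust_3[of i] by (cases \<alpha>) (auto simp: exponent_def exp_inc_def)

lemma exp_inc_dec: "exponent i \<alpha> \<ge> 1 \<Longrightarrow> exp_inc i (exp_dec i \<alpha>) = \<alpha>"
  using exhaust_3[of i] by (cases \<alpha>) (auto simp: exponent_def exp_inc_def exp_dec_def)

lemma exponent_exp_dec: "exponent i (exp_dec i \<alpha>) = exponent i \<alpha> - 1"
  using exhaust_3[of i] by (cases \<alpha>) (auto simp: exponent_def exp_dec_def)

lemma exp_dec_degs: "\<alpha> \<in> degs (Suc n) \<Longrightarrow> exponent i \<alpha> \<ge> 1 \<Longrightarrow> exp_dec i \<alpha> \<in> degs n"
  using exhaust_3[of i] by (cases \<alpha>) (auto simp: exponent_def exp_dec_def degs_def)

lemma deriv2_mon_sum: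
  "deriv (deriv (\<lambda>t. \<Sum>\<alpha>\<in>A. c \<alpha> * mon \<alpha> (x + t *\<^sub>R axis i 1))) 0
     = (\<Sum>\<alpha>\<in>A. c \<alpha> * of_nat (exponent i \<alpha> * (exponent i \<alpha> - 1)) * mon (exp_dec i (exp_dec i \<alpha>)) x)"
proof -
  define q where "q = (\<Sum>\<alpha>\<in>A. smult (c \<alpha> * mon (exponent_clear i \<alpha>) x) ([:x$i, 1:] ^ (exponent i \<alpha>)))"
  have "\<forall>t. (\<Sum>\<alpha>\<in>A. c \<alpha> * mon \<alpha> (x + t *\<^sub>R axis i 1)) = poly q t"
    by (simp add: q_def poly_sum mon_axis poly_power algebra_simps)
  then have "deriv (deriv (\<lambda>t. \<Sum>\<alpha>\<in>A. c \<alpha> * mon \<alpha> (x + t *\<^sub>R axis i 1))) 0 = poly (pderiv (pderiv q)) 0"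
    by (rule deriv2_poly)
  also have "\<dots> = (\<Sum>\<alpha>\<in>A. c \<alpha> * mon (exponent_clear i \<alpha>) x * (of_nat (exponent i \<alpha> * (exponent i \<alpha> - 1)) * x$i ^ (exponent i \<alpha> - 2)))"
    unfolding q_def by (simp add: pderiv_sum pderiv_smult poly_sum pderiv2_linear_power_at_0)
  also have "\<dots> = (\<Sum>\<alpha>\<in>A. c \<alpha> * of_nat (exponent i \<alpha> * (exponent i \<alpha> - 1)) * mon (exp_dec i (exp_dec i \<alpha>)) x)"
    by (simp add: mon_exp_dec2 algebra_simps)
  finally show ?thesis .
qed

lemma sum_deriv2_mon_reindex:
  assumes "2 \<le> n"
  shows "(\<Sum>\<alpha>\<in>degs n. c \<alpha> * of_nat (exponent i \<alpha> * (exponent i \<alpha> - 1)) * mon (exp_dec i (exp_dec i \<alpha>)) x)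
    = (\<Sum>\<beta>\<in>degs (n - 2). c (exp_inc i (exp_inc i \<beta>)) * of_nat ((exponent i \<beta> + 2) * (exponent i \<beta> + 1)) * mon \<beta> x)"
proof -
  define S where "S = (\<lambda>\<beta>. exp_inc i (exp_inc i \<beta>)) ` degs (n - 2)"
  have nn: "n = Suc (Suc (n - 2))" using assms by simp
  have Ssub: "S \<subseteq> degs n" unfolding S_def using exp_inc_degs nn by (metis image_subsetI)
  have out: "c \<alpha> * of_nat (exponent i \<alpha> * (exponent i \<alpha> - 1)) * mon (exp_dec i (exp_dec i \<alpha>)) x = 0"
    if "\<alpha> \<in> degs n - S" for \<alpha>
  proof -
    have "exponent i \<alpha> < 2"
    proof (rule ccontr)
      assume "\<not> exponent i \<alpha> < 2"
      then have c2: "exponent i \<alpha> \<ge> 2" by simp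
      have u1: "exp_dec i \<alpha> \<in> degs (Suc (n - 2))" using exp_dec_degs[of \<alpha> "Suc (n - 2)" i] that c2 nn by auto
      have "exponent i (exp_dec i \<alpha>) \<ge> 1" using c2 by (simp add: exponent_exp_dec)
      then have "exp_dec i (exp_dec i \<alpha>) \<in> degs (n - 2)" using exp_dec_degs u1 by blast
      moreover have "exp_inc i (exp_inc i (exp_dec i (exp_dec i \<alpha>))) = \<alpha>"
        using c2 \<open>exponent i (exp_dec i \<alpha>) \<ge> 1\<close> by (simp add: exp_inc_dec)
      ultimately have "\<alpha> \<in> S" unfolding S_def by (metis image_eqI)
      then show False using that by blast
    qed
    then have "exponent i \<alpha> * (exponent i \<alpha> - 1) = 0" by (cases "exponent i \<alpha>") auto
    then show ?thesis by simp
  qed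
  have "(\<Sum>\<alpha>\<in>degs n. c \<alpha> * of_nat (exponent i \<alpha> * (exponent i \<alpha> - 1)) * mon (exp_dec i (exp_dec i \<alpha>)) x)
      = (\<Sum>\<alpha>\<in>S. c \<alpha> * of_nat (exponent i \<alpha> * (exponent i \<alpha> - 1)) * mon (exp_dec i (exp_dec i \<alpha>)) x)"
    using finite_degs Ssub out by (intro sum.mono_neutral_right) auto
  also have "\<dots> = (\<Sum>\<beta>\<in>degs (n - 2). c (exp_inc i (exp_inc i \<beta>)) * of_nat ((exponent i \<beta> + 2) * (exponent i \<beta> + 1)) * mon \<beta> x)"
  proof -
    have inj: "inj_on (\<lambda>\<beta>. exp_inc i (exp_inc i \<beta>)) (degs (n - 2))" by (metis (mono_tags, lifting) inj_onI exp_dec_inc)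
    show ?thesis unfolding S_def by (simp add: sum.reindex[OF inj] exponent_exp_inc exp_dec_inc algebra_simps)
  qed
  finally show ?thesis .
qed

text \<open>Every coefficient \<open>x\<^sub>1\<^sup>a x\<^sub>2\<^sup>b x\<^sub>3\<^sup>d\<close> of the Laplacian of \<open>\<Sum>\<^sub>\<alpha> c\<^sub>\<alpha> x\<^sup>\<alpha>\<close> vanishes.\<close>

definition laplace_recurrence :: "nat \<Rightarrow> (nat \<times> nat \<times> nat \<Rightarrow> real) \<Rightarrow> bool" where
  "laplace_recurrence n c \<longleftrightarrow> (\<forall>a b d. a + b + d + 2 = n \<longrightarrow>
     of_nat ((a + 2) * (a + 1)) * c (a + 2, b, d) + of_nat ((b + 2) * (b + 1)) * c (a, b + 2, d)
     + of_nat ((d + 2) * (d + 1)) * c (a, b, d + 2) = 0)"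

lemma harmonic_laplace_recurrence:
  assumes "\<forall>x. laplacian (\<lambda>x. \<Sum>\<alpha>\<in>degs n. c \<alpha> * mon \<alpha> x) x = 0"
  shows "laplace_recurrence n c"
  unfolding laplace_recurrence_def
proof (intro allI impI)
  fix a b d assume abd: "a + b + d + 2 = n"
  then have n2: "2 \<le> n" by simp
  define e where "e \<beta> = (\<Sum>i\<in>UNIV. c (exp_inc i (exp_inc i \<beta>))
      * of_nat ((exponent i \<beta> + 2) * (exponent i \<beta> + 1)))" for \<beta>
  have "(\<Sum>\<beta>\<in>degs (n - 2). e \<beta> * mon \<beta> x) = 0" for x
  proof -
    have "laplacian (\<lambda>x. \<Sum>\<alpha>\<in>degs n. c \<alpha> * mon \<alpha> x) x = (\<Sum>i\<in>UNIV. \<Sum>\<beta>\<in>degs (n - 2).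
        c (exp_inc i (exp_inc i \<beta>)) * of_nat ((exponent i \<beta> + 2) * (exponent i \<beta> + 1)) * mon \<beta> x)"
      unfolding laplacian_def deriv2_mon_sum sum_deriv2_mon_reindex[OF n2] ..
    also have "\<dots> = (\<Sum>\<beta>\<in>degs (n - 2). e \<beta> * mon \<beta> x)"
      unfolding e_def by (rule trans[OF sum.swap]) (simp add: sum_distrib_right)
    finally show ?thesis using assms by simp
  qed
  moreover have "(a, b, d) \<in> degs (n - 2)" using abd by (auto simp: degs_def)
  ultimately have "e (a, b, d) = 0" using mon_independent by blast
  then show "of_nat ((a + 2) * (a + 1)) * c (a + 2, b, d) + of_nat ((b + 2) * (b + 1)) * c (a, b + 2, d)
      + of_nat ((d + 2) * (d + 1)) * c (a, b, d + 2) = 0"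
    by (simp add: e_def sum_3 exp_inc_def exponent_def mult.commute)
qed

text \<open>\<open>harm_coeff \<beta> a b d\<close> is the coefficient of \<open>x\<^sub>1\<^sup>a x\<^sub>2\<^sup>b x\<^sub>3\<^sup>d\<close> in the harmonic polynomial
  whose coefficients of degree at most one in \<open>x\<^sub>3\<close> are the indicator of \<open>\<beta>\<close>: the recurrence
  solves \<open>laplace_recurrence\<close> for the coefficient with the highest power of \<open>x\<^sub>3\<close>.\<close>

fun harm_coeff :: "nat \<times> nat \<times> nat \<Rightarrow> nat \<Rightarrow> nat \<Rightarrow> nat \<Rightarrow> real" where
  "harm_coeff \<beta> a b 0 = (if \<beta> = (a, b, 0) then 1 else 0)"
| "harm_coeff \<beta> a b (Suc 0) = (if \<beta> = (a, b, 1) then 1 else 0)"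
| "harm_coeff \<beta> a b (Suc (Suc d)) = - (of_nat ((a + 2) * (a + 1)) * harm_coeff \<beta> (a + 2) b d
      + of_nat ((b + 2) * (b + 1)) * harm_coeff \<beta> a (b + 2) d) / of_nat ((d + 2) * (d + 1))"

definition low_degs :: "nat \<Rightarrow> (nat \<times> nat \<times> nat) set" where
  "low_degs n = {\<beta> \<in> degs n. exponent 3 \<beta> \<le> 1}"

lemma finite_low_degs: "finite (low_degs n)"
  using finite_degs unfolding low_degs_def by simp

lemma harm_coeff_low: "d \<le> 1 \<Longrightarrow> harm_coeff \<beta> a b d = (if \<beta> = (a, b, d) then 1 else 0)"
  by (cases d) auto

lemma harmonic_coeff_expand:
  assumes "laplace_recurrence n c" "a + b + d = n"
  shows "c (a, b, d) = (\<Sum>\<beta>\<in>low_degs n. c \<beta> * harm_coeff \<beta> a b d)"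
  using assms(2)
proof (induction d arbitrary: a b rule: less_induct)
  case (less d)
  show ?case
  proof (cases "d \<le> 1")
    case True
    then have "(a, b, d) \<in> low_degs n" using less.prems by (simp add: low_degs_def degs_def exponent_def)
    moreover have "(\<Sum>\<beta>\<in>low_degs n. c \<beta> * harm_coeff \<beta> a b d)
        = (\<Sum>\<beta>\<in>low_degs n. if \<beta> = (a, b, d) then c \<beta> else 0)"
      using True by (intro sum.cong) (auto simp: harm_coeff_low)
    ultimately show ?thesis using finite_low_degs by (simp add: sum.delta)
  next
    case False
    define d' where "d' = d - 2"
    have d: "d = d' + 2" using False by (simp add: d'_def)
    define A :: real where "A = of_nat ((a + 2) * (a + 1))"
    define B :: real where "B = of_nat ((b + 2) * (b + 1))"
    define E :: real where "E = of_nat ((d' + 2) * (d' + 1))"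
    have "a + b + d' + 2 = n" using less.prems d by simp
    then have "A * c (a + 2, b, d') + B * c (a, b + 2, d') + E * c (a, b, d' + 2) = 0"
      using assms(1) unfolding laplace_recurrence_def A_def B_def E_def by blast
    then have "E * c (a, b, d) = - (A * c (a + 2, b, d') + B * c (a, b + 2, d'))"
      unfolding d by linarith
    moreover have "E \<noteq> 0" unfolding E_def by (simp only: of_nat_eq_0_iff) simp
    ultimately have "c (a, b, d) = - (A * c (a + 2, b, d') + B * c (a, b + 2, d')) / E"
      by (metis nonzero_mult_div_cancel_left)
    also have "\<dots> = - (A * (\<Sum>\<beta>\<in>low_degs n. c \<beta> * harm_coeff \<beta> (a + 2) b d')
        + B * (\<Sum>\<beta>\<in>low_degs n. c \<beta> * harm_coeff \<beta> a (b + 2) d')) / E"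
      using less.IH[of d' "a + 2" b] less.IH[of d' a "b + 2"] less.prems d by simp
    also have "\<dots> = (\<Sum>\<beta>\<in>low_degs n.
        - (A * (c \<beta> * harm_coeff \<beta> (a + 2) b d') + B * (c \<beta> * harm_coeff \<beta> a (b + 2) d')) / E)"
      by (simp add: sum_divide_distrib[symmetric] sum_negf sum.distrib sum_distrib_left sum_subtractf)
    also have "\<dots> = (\<Sum>\<beta>\<in>low_degs n. c \<beta> * harm_coeff \<beta> a b d)"
      unfolding d A_def B_def E_def by (intro sum.cong) (simp_all add: algebra_simps)
    finally show ?thesis .
  qed
qed

lemma card_low_degs: "card (low_degs n) \<le> 2 * n + 1"
proof -
  have sub: "low_degs n \<subseteq> (\<lambda>a. (a, n - a, 0::nat)) ` {..n} \<union> (\<lambda>a. (a, n - 1 - a, 1::nat)) ` {..<n}"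
  proof
    fix \<beta> assume "\<beta> \<in> low_degs n"
    then obtain a b d where \<beta>: "\<beta> = (a, b, d)" "a + b + d = n" "d \<le> 1"
      unfolding low_degs_def degs_def exponent_def by auto
    show "\<beta> \<in> (\<lambda>a. (a, n - a, 0::nat)) ` {..n} \<union> (\<lambda>a. (a, n - 1 - a, 1::nat)) ` {..<n}"
    proof (cases d)
      case 0 then show ?thesis using \<beta> by (auto intro!: image_eqI[of _ _ a])
    next
      case (Suc e) then have "d = 1" using \<beta> by simp
      then show ?thesis using \<beta> by (auto intro!: image_eqI[of _ _ a])
    qed
  qed
  have "card (low_degs n) \<le> card ((\<lambda>a. (a, n - a, 0::nat)) ` {..n} \<union> (\<lambda>a. (a, n - 1 - a, 1::nat)) ` {..<n})"
    by (rule card_mono[OF _ sub]) auto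
  also have "\<dots> \<le> card ((\<lambda>a. (a, n - a, 0::nat)) ` {..n}) + card ((\<lambda>a. (a, n - 1 - a, 1::nat)) ` {..<n})"
    by (rule card_Un_le)
  also have "\<dots> \<le> card {..n} + card {..<n}"
    by (intro add_mono card_image_le) auto
  finally show ?thesis by simp
qed

lemma sum_fun_apply: "(\<Sum>i\<in>A. g i) x = (\<Sum>i\<in>A. g i x)"
  by (induction A rule: infinite_finite_induct) auto

definition harm_basis :: "nat \<Rightarrow> nat \<times> nat \<times> nat \<Rightarrow> real^3 \<Rightarrow> real" where
  "harm_basis n \<beta> x = (\<Sum>(a, b, d)\<in>degs n. harm_coeff \<beta> a b d * mon (a, b, d) x)"

lemma harmonic_hom_in_span_harm_basis:
  assumes "f \<in> harmonic_hom n"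
  shows "f \<in> fspace.span (harm_basis n ` low_degs n)"
proof -
  obtain c where f: "f = (\<lambda>x. \<Sum>\<alpha>\<in>degs n. c \<alpha> * mon \<alpha> x)"
    using assms unfolding harmonic_hom_def hom_poly_iff by blast
  then have rec: "laplace_recurrence n c"
    using assms unfolding harmonic_hom_def by (intro harmonic_laplace_recurrence) simp
  have "f x = (\<Sum>\<beta>\<in>low_degs n. c \<beta> * harm_basis n \<beta> x)" for x
  proof -
    have "f x = (\<Sum>(a, b, d)\<in>degs n. (\<Sum>\<beta>\<in>low_degs n. c \<beta> * harm_coeff \<beta> a b d) * mon (a, b, d) x)"
      unfolding f using harmonic_coeff_expand[OF rec] by (intro sum.cong) (auto simp: degs_def)
    also have "\<dots> = (\<Sum>\<beta>\<in>low_degs n. c \<beta> * harm_basis n \<beta> x)"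
      unfolding harm_basis_def split_beta
      by (simp add: sum_distrib_left sum_distrib_right mult.assoc sum.swap[of _ "degs n"])
    finally show ?thesis .
  qed
  then have "f = (\<Sum>\<beta>\<in>low_degs n. fscale (c \<beta>) (harm_basis n \<beta>))"
    by (simp add: fun_eq_iff sum_fun_apply fscale_def)
  also have "\<dots> \<in> fspace.span (harm_basis n ` low_degs n)"
    by (intro fspace.span_sum fspace.span_scale fspace.span_base) auto
  finally show ?thesis .
qed

section \<open>Dimension bounds\<close>

lemma fscale_sum_apply: "(\<Sum>p\<in>I. fscale (w p) (\<phi> p)) x = (\<Sum>p\<in>I. w p * \<phi> p x)"
  by (simp add: sum_fun_apply fscale_def)

lemma card_le_dim_if_independent:
  assumes "B \<subseteq> E" "fspace.independent B" "E \<subseteq> fspace.span W" "finite W"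
  shows "card B \<le> fspace.dim E"
proof -
  obtain A where A: "A \<subseteq> E" "fspace.independent A" "E \<subseteq> fspace.span A" "card A = fspace.dim E"
    by (rule fspace.basis_exists)
  have "finite A"
    using A(1) assms(3) fspace.independent_span_bound[OF assms(4) A(2)] by blast
  moreover have "B \<subseteq> fspace.span A" using assms(1) A(3) by blast
  ultimately show ?thesis using fspace.independent_span_bound[of A B] assms(2) A(4) by simp
qed

lemma dim_harmonic_hom_le:
  assumes "A \<subseteq> harmonic_hom n"
  shows "fspace.dim A \<le> 2 * n + 1"
proof -
  have "fspace.dim A \<le> card (harm_basis n ` low_degs n)"
    using assms harmonic_hom_in_span_harm_basis finite_degs
    by (intro fspace.dim_le_card) (auto simp: low_degs_def)
  also have "\<dots> \<le> card (low_degs n)"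
    using finite_degs by (intro card_image_le) (simp add: low_degs_def)
  finally show ?thesis using card_low_degs[of n] by simp
qed

definition family_independent :: "('i \<Rightarrow> real^3 \<Rightarrow> real) \<Rightarrow> 'i set \<Rightarrow> bool" where
  "family_independent \<phi> I \<longleftrightarrow> (\<forall>w. (\<forall>x. (\<Sum>p\<in>I. w p * \<phi> p x) = 0) \<longrightarrow> (\<forall>p\<in>I. w p = 0))"

lemma family_independent_inj_on:
  assumes "family_independent \<phi> I" "finite I"
  shows "inj_on \<phi> I"
proof (rule inj_onI, rule ccontr)
  fix p q assume pq: "p \<in> I" "q \<in> I" "\<phi> p = \<phi> q" "p \<noteq> q"
  define w where "w i = (if i = p then 1 else if i = q then -1 else 0 :: real)" for i
  have "(\<Sum>i\<in>I. w i * \<phi> i x) = (\<Sum>i\<in>{p, q}. w i * \<phi> i x)" for x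
    using assms(2) pq by (intro sum.mono_neutral_right) (auto simp: w_def)
  then have "\<forall>x. (\<Sum>i\<in>I. w i * \<phi> i x) = 0" using pq by (simp add: w_def)
  then have "w p = 0" using assms(1) pq unfolding family_independent_def by blast
  then show False by (simp add: w_def)
qed

lemma family_independent_independent:
  assumes "family_independent \<phi> I" "finite I"
  shows "fspace.independent (\<phi> ` I)"
proof (rule fspace.independent_if_scalars_zero)
  show "finite (\<phi> ` I)" using assms(2) by simp
  fix c e assume c: "(\<Sum>f\<in>\<phi> ` I. fscale (c f) f) = 0" and e: "e \<in> \<phi> ` I"
  have "(\<Sum>p\<in>I. fscale (c (\<phi> p)) (\<phi> p)) = 0"
    using c by (simp add: sum.reindex[OF family_independent_inj_on[OF assms]])
  then have "\<forall>x. (\<Sum>p\<in>I. c (\<phi> p) * \<phi> p x) = 0"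
    by (metis fscale_sum_apply zero_fun_apply)
  then have "\<forall>p\<in>I. c (\<phi> p) = 0"
    using assms(1)[unfolded family_independent_def, rule_format, of "\<lambda>p. c (\<phi> p)"] by blast
  then show "c e = 0" using e by blast
qed

lemma card_le_dim_if_family_independent:
  assumes "family_independent \<phi> J" "finite J" "\<phi> ` J \<subseteq> A" "A \<subseteq> harmonic_hom n"
  shows "card J \<le> fspace.dim A"
proof -
  have "card (\<phi> ` J) \<le> fspace.dim A"
    using assms harmonic_hom_in_span_harm_basis finite_degs
    by (intro card_le_dim_if_independent[where W = "harm_basis n ` low_degs n"]
        family_independent_independent) (auto simp: low_degs_def)
  then show ?thesis using card_image[OF family_independent_inj_on[OF assms(1,2)]] by simp
qed

section \<open>Independence of the axial harmonics\<close>

definition admissible :: "(nat \<Rightarrow> real^3) \<Rightarrow> (nat \<Rightarrow> real^3) \<Rightarrow> (nat \<Rightarrow> real^3) \<Rightarrow> nat set \<Rightarrow> bool" where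
  "admissible \<omega> u v K \<longleftrightarrow> (\<forall>k\<in>K. orthonormal_frame (\<omega> k) (u k) (v k)) \<and>
      (\<forall>j\<in>K. \<forall>k\<in>K. j \<noteq> k \<longrightarrow> \<omega> k \<noteq> \<omega> j \<and> \<omega> k \<noteq> - \<omega> j)"

lemma orthonormal_frames_exist:
  assumes "\<forall>k\<in>K. norm (\<omega> k) = 1"
  obtains u v where "\<forall>k\<in>K. orthonormal_frame (\<omega> k) (u k) (v k)"
proof -
  have "\<forall>k\<in>K. \<exists>uv. orthonormal_frame (\<omega> k) (fst uv) (snd uv)"
  proof
    fix k assume "k \<in> K"
    then obtain u v where "orthonormal_frame (\<omega> k) u v"
      using assms orthonormal_frame_exists by meson
    then show "\<exists>uv. orthonormal_frame (\<omega> k) (fst uv) (snd uv)" by (intro exI[of _ "(u, v)"]) simp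
  qed
  then obtain uv where "\<forall>k\<in>K. orthonormal_frame (\<omega> k) (fst (uv k)) (snd (uv k))"
    using bchoice by meson
  then show ?thesis by (rule that)
qed

lemma admissible_subset: "admissible \<omega> u v K \<Longrightarrow> K' \<subseteq> K \<Longrightarrow> admissible \<omega> u v K'"
  unfolding admissible_def by blast

text \<open>\<open>cform_at (null_vec u v (k, True))\<close> is \<open>h\<^sub>k\<close> and \<open>cform_at (null_vec u v (k, False))\<close> its
  conjugate.\<close>

definition null_vec :: "(nat \<Rightarrow> real^3) \<Rightarrow> (nat \<Rightarrow> real^3) \<Rightarrow> nat \<times> bool \<Rightarrow> complex^3" where
  "null_vec u v p = cvec (u (fst p)) (if snd p then v (fst p) else - v (fst p))"

lemma null_vec_isotropic:
  assumes "admissible \<omega> u v K" "p \<in> K \<times> UNIV"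
  shows "isotropic (null_vec u v p) \<and> null_vec u v p \<noteq> 0"
  using assms isotropic_cvec cvec_nonzero
  unfolding admissible_def orthonormal_frame_def null_vec_def by auto

lemma null_vec_not_proportional:
  assumes "admissible \<omega> u v K" "p \<in> K \<times> UNIV" "q \<in> K \<times> UNIV" "p \<noteq> q"
  shows "\<not> proportional (null_vec u v p) (null_vec u v q)"
proof -
  obtain j b k b' where pq: "p = (j, b)" "q = (k, b')" by fastforce
  have fr: "orthonormal_frame (\<omega> j) (u j) (v j)" "orthonormal_frame (\<omega> k) (u k) (v k)"
    using assms pq unfolding admissible_def by auto
  show ?thesis
  proof (cases "j = k")
    case True
    then have "b \<noteq> b'" using assms(4) pq by auto
    then show ?thesis
      using cvec_not_proportional_conj[of "u k" "v k"] cvec_not_proportional_conj[of "u k" "- v k"]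
        fr True pq
      unfolding null_vec_def orthonormal_frame_def by (cases b) auto
  next
    case False
    then have "\<omega> k \<noteq> \<omega> j \<and> \<omega> k \<noteq> - \<omega> j" using assms pq unfolding admissible_def by auto
    then show ?thesis using cvec_not_proportional[OF fr] pq unfolding null_vec_def by auto
  qed
qed

lemma null_vec_powers_independent:
  fixes E :: "nat \<times> bool \<Rightarrow> complex"
  assumes "admissible \<omega> u v K" "J \<subseteq> K \<times> UNIV" "finite J" "card J \<le> 2 * n + 1"
    and "\<forall>x. (\<Sum>p\<in>J. E p * cform_at (null_vec u v p) x ^ n) = 0"
  shows "\<forall>p\<in>J. E p = 0"
proof (rule isotropic_powers_independent[where w = "null_vec u v"])
  show "\<forall>p\<in>J. isotropic (null_vec u v p) \<and> null_vec u v p \<noteq> 0"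
    using null_vec_isotropic assms(1,2) by blast
  show "\<forall>p\<in>J. \<forall>q\<in>J. p \<noteq> q \<longrightarrow> \<not> proportional (null_vec u v p) (null_vec u v q)"
    using null_vec_not_proportional assms(1,2) by blast
  show "\<forall>x1 x2 x3::real. (\<Sum>p\<in>J. E p * cform (null_vec u v p) (of_real x1) (of_real x2) (of_real x3) ^ n) = 0"
  proof (intro allI)
    fix x1 x2 x3 :: real
    show "(\<Sum>p\<in>J. E p * cform (null_vec u v p) (of_real x1) (of_real x2) (of_real x3) ^ n) = 0"
      using assms(5)[rule_format, of "vector [x1, x2, x3]"] by (simp add: cform_at_def vector_3)
  qed
qed (use assms in auto)

definition conj_coeff :: "(nat \<Rightarrow> complex) \<Rightarrow> nat \<times> bool \<Rightarrow> complex" where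
  "conj_coeff c p = (if snd p then c (fst p) else cnj (c (fst p)))"

lemma sum_Re_hform_eq:
  "2 * complex_of_real (\<Sum>k\<in>K. Re (c k * hform (u k) (v k) x ^ n))
     = (\<Sum>p\<in>K \<times> UNIV. conj_coeff c p * cform_at (null_vec u v p) x ^ n)"
proof -
  have "(\<Sum>p\<in>K \<times> UNIV. conj_coeff c p * cform_at (null_vec u v p) x ^ n)
      = (\<Sum>k\<in>K. \<Sum>b\<in>UNIV. conj_coeff c (k, b) * cform_at (null_vec u v (k, b)) x ^ n)"
    by (simp add: sum.cartesian_product)
  also have "\<dots> = (\<Sum>k\<in>K. c k * hform (u k) (v k) x ^ n + cnj (c k * hform (u k) (v k) x ^ n))"
    by (simp add: UNIV_bool conj_coeff_def null_vec_def cform_at_cvec cnj_hform add.commute)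
  also have "\<dots> = (\<Sum>k\<in>K. 2 * complex_of_real (Re (c k * hform (u k) (v k) x ^ n)))"
    by (rule sum.cong[OF refl], subst complex_add_cnj) simp
  finally show ?thesis by (simp add: sum_distrib_left)
qed

lemma Re_hform_powers_independent:
  assumes "admissible \<omega> u v K" "finite K" "card K \<le> n"
    and "\<forall>x. (\<Sum>k\<in>K. Re (c k * hform (u k) (v k) x ^ n)) = 0"
  shows "\<forall>k\<in>K. c k = 0"
proof -
  have "\<forall>p\<in>K \<times> UNIV. conj_coeff c p = 0"
    using assms sum_Re_hform_eq[of c u v _ n K, symmetric]
    by (intro null_vec_powers_independent[OF assms(1)]) (auto simp: card_cartesian_product)
  then show ?thesis unfolding conj_coeff_def by (metis (full_types) SigmaI UNIV_I fst_conv snd_conv)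
qed

text \<open>With \<open>n + 1\<close> directions the \<open>2n + 2\<close> powers \<open>h\<^sub>k\<^sup>n, (h\<^sub>k\<^sup>*)\<^sup>n\<close> are no longer independent, but
  eliminating \<open>h\<^sub>m\<^sup>n\<close> between two relations leaves only \<open>2n + 1\<close> of them.\<close>

lemma Re_hform_relations_coeff_real:
  assumes "admissible \<omega> u v (insert m K)" "finite K" "m \<notin> K" "card K = n"
    and "\<forall>x. (\<Sum>k\<in>insert m K. Re (c k * hform (u k) (v k) x ^ n)) = 0"
    and "\<forall>x. (\<Sum>k\<in>insert m K. Re (c' k * hform (u k) (v k) x ^ n)) = 0"
  shows "c' m * cnj (c m) = c m * cnj (c' m)"
proof -
  define I where "I = insert m K \<times> (UNIV :: bool set)"
  define E where "E p = c' m * conj_coeff c p - c m * conj_coeff c' p" for p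
  have rel: "(\<Sum>p\<in>I. conj_coeff d p * cform_at (null_vec u v p) x ^ n) = 0"
    if "\<forall>x. (\<Sum>k\<in>insert m K. Re (d k * hform (u k) (v k) x ^ n)) = 0" for d x
    using sum_Re_hform_eq[of d u v x n "insert m K"] that unfolding I_def
    by (metis mult_zero_right of_real_0)
  have "(\<Sum>p\<in>I. E p * cform_at (null_vec u v p) x ^ n)
      = c' m * (\<Sum>p\<in>I. conj_coeff c p * cform_at (null_vec u v p) x ^ n)
        - c m * (\<Sum>p\<in>I. conj_coeff c' p * cform_at (null_vec u v p) x ^ n)" for x
    unfolding E_def by (simp add: sum_distrib_left sum_subtractf algebra_simps)
  then have "(\<Sum>p\<in>I. E p * cform_at (null_vec u v p) x ^ n) = 0" for x
    using rel[OF assms(5)] rel[OF assms(6)] by simp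
  moreover have "E (m, True) = 0" unfolding E_def conj_coeff_def by simp
  moreover have "finite I" "(m, True) \<in> I" using assms(2) unfolding I_def by simp_all
  ultimately have "(\<Sum>p\<in>I - {(m, True)}. E p * cform_at (null_vec u v p) x ^ n) = 0" for x
    by (simp add: sum.remove)
  moreover have "card (I - {(m, True)}) = 2 * n + 1"
    using assms(2,3,4) unfolding I_def by (simp add: card_cartesian_product)
  ultimately have "\<forall>p\<in>I - {(m, True)}. E p = 0"
    using assms(1,2) by (intro null_vec_powers_independent) (auto simp: I_def)
  then have "E (m, False) = 0" unfolding I_def by simp
  then show ?thesis unfolding E_def conj_coeff_def by simp
qed

text \<open>\<open>axial_basis n u v (k, True)\<close> is \<open>Re (h\<^sub>k\<^sup>n)\<close> and \<open>axial_basis n u v (k, False)\<close> is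
  \<open>Im (h\<^sub>k\<^sup>n)\<close>.\<close>

definition axial_basis :: "nat \<Rightarrow> (nat \<Rightarrow> real^3) \<Rightarrow> (nat \<Rightarrow> real^3) \<Rightarrow> nat \<times> bool \<Rightarrow> real^3 \<Rightarrow> real" where
  "axial_basis n u v p = axial_harmonic n (u (fst p)) (v (fst p)) (if snd p then 1 else - \<i>)"

definition complex_coeff :: "(nat \<times> bool \<Rightarrow> real) \<Rightarrow> nat \<Rightarrow> complex" where
  "complex_coeff w k = of_real (w (k, True)) - \<i> * of_real (w (k, False))"

lemma sum_axial_basis:
  "(\<Sum>p\<in>K \<times> UNIV. w p * axial_basis n u v p x)
     = (\<Sum>k\<in>K. Re (complex_coeff w k * hform (u k) (v k) x ^ n))"
proof -
  have "(\<Sum>p\<in>K \<times> UNIV. w p * axial_basis n u v p x)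
      = (\<Sum>k\<in>K. \<Sum>b\<in>UNIV. w (k, b) * axial_basis n u v (k, b) x)"
    by (simp add: sum.cartesian_product)
  then show ?thesis
    by (simp add: UNIV_bool axial_basis_def axial_harmonic_def complex_coeff_def algebra_simps)
qed

lemma span_harmonic_axial_union:
  assumes "\<forall>k\<in>K. orthonormal_frame (\<omega> k) (u k) (v k)"
  shows "fspan (\<Union>k\<in>K. harmonic_axial n (\<omega> k)) = fspace.span (axial_basis n u v ` (K \<times> UNIV))"
proof -
  let ?S = "\<Union>k\<in>K. harmonic_axial n (\<omega> k)" and ?B = "axial_basis n u v ` (K \<times> UNIV)"
  have "?B \<subseteq> ?S"
    using assms axial_harmonic_in_harmonic_axial by (force simp: axial_basis_def)
  moreover have "?S \<subseteq> fspace.span ?B"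
  proof
    fix f assume "f \<in> ?S"
    then obtain k where k: "k \<in> K" "f \<in> harmonic_axial n (\<omega> k)" by blast
    have "{axial_harmonic n (u k) (v k) 1, axial_harmonic n (u k) (v k) (- \<i>)} \<subseteq> ?B"
      using k(1) image_eqI[of _ "axial_basis n u v" "(k, True)"]
        image_eqI[of _ "axial_basis n u v" "(k, False)"]
      by (auto simp: axial_basis_def)
    then show "f \<in> fspace.span ?B"
      using harmonic_axial_in_span[OF _ k(2)] assms k(1) fspace.span_mono by blast
  qed
  ultimately show ?thesis
    unfolding fspan_def by (metis fspace.span_mono fspace.span_span subset_antisym)
qed

lemma axial_basis_independent:
  assumes "admissible \<omega> u v K" "finite K" "card K \<le> n"
  shows "family_independent (axial_basis n u v) (K \<times> UNIV)"
  unfolding family_independent_def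
proof (intro allI impI ballI)
  fix w p assume "\<forall>x. (\<Sum>p\<in>K \<times> UNIV. w p * axial_basis n u v p x) = 0" and p: "p \<in> K \<times> (UNIV :: bool set)"
  then have "\<forall>k\<in>K. complex_coeff w k = 0"
    using Re_hform_powers_independent[OF assms] by (simp add: sum_axial_basis)
  then show "w p = 0" using p by (cases p; cases "snd p") (auto simp: complex_coeff_def complex_eq_iff)
qed

lemma axial_basis_independent_extra:
  assumes "admissible \<omega> u v (insert m K)" "finite K" "m \<notin> K" "card K = n"
  shows "\<exists>b. family_independent (axial_basis n u v) (insert (m, b) (K \<times> UNIV))"
proof (rule ccontr)
  define J where "J b = insert (m, b) (K \<times> UNIV)" for b :: bool
  assume "\<not> ?thesis"
  then have "\<forall>b. \<exists>w. (\<forall>x. (\<Sum>p\<in>J b. w p * axial_basis n u v p x) = 0) \<and> (\<exists>p\<in>J b. w p \<noteq> 0)"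
    unfolding family_independent_def J_def by blast
  then obtain w where w: "\<forall>b. (\<forall>x. (\<Sum>p\<in>J b. w b p * axial_basis n u v p x) = 0) \<and> (\<exists>p\<in>J b. w b p \<noteq> 0)"
    by (rule choice[elim_format]) blast
  then have rel: "\<And>b x. (\<Sum>p\<in>J b. w b p * axial_basis n u v p x) = 0"
    and nontrivial: "\<And>b. \<exists>p\<in>J b. w b p \<noteq> 0"
    by blast+
  define c where "c b = complex_coeff (\<lambda>p. if p \<in> J b then w b p else 0)" for b
  have JK: "J b \<subseteq> insert m K \<times> UNIV" for b unfolding J_def by auto
  have rel_c: "\<forall>x. (\<Sum>k\<in>insert m K. Re (c b k * hform (u k) (v k) x ^ n)) = 0" for b
  proof
    fix x
    have "(\<Sum>p\<in>insert m K \<times> UNIV. (if p \<in> J b then w b p else 0) * axial_basis n u v p x)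
        = (\<Sum>p\<in>J b. w b p * axial_basis n u v p x)"
      using JK assms(2) by (intro sum.mono_neutral_cong_right) auto
    then show "(\<Sum>k\<in>insert m K. Re (c b k * hform (u k) (v k) x ^ n)) = 0"
      using rel unfolding c_def sum_axial_basis by simp
  qed
  have cm: "c True m = of_real (w True (m, True))" "c False m = - \<i> * of_real (w False (m, False))"
    using assms(3) by (auto simp: c_def complex_coeff_def J_def)
  have "c False m * cnj (c True m) = c True m * cnj (c False m)"
    by (rule Re_hform_relations_coeff_real[OF assms rel_c rel_c])
  then have "w True (m, True) = 0 \<or> w False (m, False) = 0"
    unfolding cm by (auto simp: complex_eq_iff)
  moreover have "w b (m, b) \<noteq> 0" for b
  proof
    assume wm: "w b (m, b) = 0"
    then have "c b m = 0" by (cases b) (auto simp: c_def complex_coeff_def J_def assms(3))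
    then have "\<forall>x. (\<Sum>k\<in>K. Re (c b k * hform (u k) (v k) x ^ n)) = 0"
      using rel_c[of b] assms(2,3) by simp
    then have "\<forall>k\<in>K. c b k = 0"
      using Re_hform_powers_independent[OF admissible_subset[OF assms(1)]] assms(2,4) by blast
    then have "w b (k, b') = 0" if "k \<in> K" for k b'
      using that assms(3) by (cases b') (auto simp: J_def c_def complex_coeff_def complex_eq_iff)
    then have "\<forall>p\<in>J b. w b p = 0" using wm unfolding J_def by auto
    then show False using nontrivial[of b] by blast
  qed
  ultimately show False by blast
qed

theorem proposition3:
  fixes n r :: nat and \<omega> :: "nat \<Rightarrow> real^3"
  assumes "r \<ge> 1"
    and "\<forall>k\<in>{1..r}. norm (\<omega> k) = 1"
    and "\<forall>i\<in>{1..r}. \<forall>j\<in>{1..r}. i \<noteq> j \<longrightarrow> \<omega> i \<noteq> \<omega> j \<and> \<omega> i \<noteq> - \<omega> j"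
  shows "fdim (fspan (\<Union>k\<in>{1..r}. harmonic_axial n (\<omega> k)))
           = (if r \<le> n then 2 * r else 2 * n + 1)"
proof -
  obtain u v where frames: "\<forall>k\<in>{1..r}. orthonormal_frame (\<omega> k) (u k) (v k)"
    using orthonormal_frames_exist[OF assms(2)] by blast
  then have adm: "admissible \<omega> u v {1..r}" using assms(3) unfolding admissible_def by simp
  let ?A = "axial_basis n u v ` ({1..r} \<times> UNIV)"
  have dim: "fdim (fspan (\<Union>k\<in>{1..r}. harmonic_axial n (\<omega> k))) = fspace.dim ?A"
    unfolding span_harmonic_axial_union[OF frames] fdim_def by simp
  have harm: "?A \<subseteq> harmonic_hom n"
    using frames axial_harmonic_in_harmonic_axial by (force simp: axial_basis_def harmonic_axial_def)
  have "fspace.dim ?A \<le> card ?A" by (rule fspace.dim_le_card') simp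
  also have "\<dots> \<le> 2 * r"
    using card_image_le[of "{1..r} \<times> (UNIV :: bool set)" "axial_basis n u v"]
    by (simp add: card_cartesian_product mult.commute)
  finally have upper: "fspace.dim ?A \<le> 2 * r" "fspace.dim ?A \<le> 2 * n + 1"
    using dim_harmonic_hom_le[OF harm] by simp_all
  have lower: "card J \<le> fspace.dim ?A"
    if "J \<subseteq> {1..r} \<times> UNIV" "family_independent (axial_basis n u v) J" for J
  proof (rule card_le_dim_if_family_independent[OF that(2) _ _ harm])
    show "finite J" using that(1) by (rule finite_subset) simp
    show "axial_basis n u v ` J \<subseteq> ?A" using that(1) by auto
  qed
  show ?thesis
  proof (cases "r \<le> n")
    case True
    have "family_independent (axial_basis n u v) ({1..r} \<times> UNIV)"
      by (rule axial_basis_independent[OF adm]) (use True in simp_all)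
    then have "2 * r \<le> fspace.dim ?A"
      using lower[of "{1..r} \<times> UNIV"] by (simp add: card_cartesian_product)
    then show ?thesis using True upper(1) dim by simp
  next
    case False
    then have "insert (n + 1) {1..n} \<subseteq> {1..r}" by auto
    then have "\<exists>b. family_independent (axial_basis n u v) (insert (n + 1, b) ({1..n} \<times> UNIV))"
      by (intro axial_basis_independent_extra[OF admissible_subset[OF adm]]) simp_all
    then obtain b where "family_independent (axial_basis n u v) (insert (n + 1, b) ({1..n} \<times> UNIV))"
      by blast
    moreover have "insert (n + 1, b) ({1..n} \<times> UNIV) \<subseteq> {1..r} \<times> UNIV" using False by auto
    ultimately have "card (insert (n + 1, b) ({1..n} \<times> (UNIV :: bool set))) \<le> fspace.dim ?A"
      using lower by blast
    then have "2 * n + 1 \<le> fspace.dim ?A" by (simp add: card_cartesian_product)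
    then show ?thesis using False upper(2) dim by simp
  qed
qed

end
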